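(* Let $d\ge 1$ be an integer and let $\{X_{\mathbf n};\ \mathbf n\in\mathbb N^d\}$ be a negatively associated field of identically distributed random variables. If $$\mathbb P\Big(\limsup_{\mathbf n\to\infty}\frac{|S_{\mathbf n}|}{(2d|\mathbf n|\log\log|\mathbf n|)^{1/2}}<\infty\Big)>0,$$ then $\mathbb E X_{\mathbf 1}=0$ and $\mathbb E\big[X_{\mathbf 1}^2\log^{d-1}(|X_{\mathbf 1}|)/\log\log(|X_{\mathbf 1}|)\big]<\infty$.
   Context: A finite family $\{X_i;1\le i\le n\}$ of random variables is negatively associated if for every pair of disjoint subsets $A,B\subset\{1,\dots,n\}$, $\operatorname{Cov}(f(X_i;i\in A),g(X_j;j\in B))\le 0$ whenever $f,g$ are coordinatewise non-decreasing and the covariance exists; an infinite family is negatively associated if every finite subfamily is. For $\mathbf n=(n_1,\dots,n_d)\in\mathbb N^d$, $|\mathbf n|=n_1\cdots n_d$; $\mathbf k\le\mathbf n$ means $k_i\le n_i$ for all $i$; $\mathbf 1=(1,\dots,1)$; $S_{\mathbf n}=\sum_{\mathbf k\le\mathbf n}X_{\mathbf k}$; $\mathbf n\to\infty$ means $n_1\to\infty,\dots,n_d\to\infty$. Throughout, $\log x=\ln(x\vee e)$. *)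

theory Defs
  imports "HOL-Probability.Probability"
begin

definition Log :: "real \<Rightarrow> real" where
  "Log x = ln (max x (exp 1))"

text \<open>Multi-indices in N^d are functions 'd \<Rightarrow> nat (with 'd finite, d = CARD('d))
  whose coordinates are all \<ge> 1.\<close>
definition pos_idx :: "('d \<Rightarrow> nat) set" where
  "pos_idx = {n. \<forall>i. 1 \<le> n i}"

definition idx_size :: "('d::finite \<Rightarrow> nat) \<Rightarrow> nat" where
  "idx_size n = (\<Prod>i\<in>UNIV. n i)"

definition partial_sum :: "('d::finite \<Rightarrow> nat) \<Rightarrow> (('d \<Rightarrow> nat) \<Rightarrow> 'a \<Rightarrow> real) \<Rightarrow> 'a \<Rightarrow> real" where
  "partial_sum n X \<omega> = (\<Sum>k\<in>{k. \<forall>i. 1 \<le> k i \<and> k i \<le> n i}. X k \<omega>)"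

definition mi_at_top :: "('d \<Rightarrow> nat) filter" where
  "mi_at_top = (INF i. filtercomap (\<lambda>n. n i) at_top)"

definition coord_mono :: "'i set \<Rightarrow> (('i \<Rightarrow> real) \<Rightarrow> real) \<Rightarrow> bool" where
  "coord_mono A f \<longleftrightarrow> (\<forall>x y. (\<forall>i\<in>A. x i \<le> y i) \<longrightarrow> f x \<le> f y)"

definition neg_assoc :: "'a measure \<Rightarrow> 'i set \<Rightarrow> ('i \<Rightarrow> 'a \<Rightarrow> real) \<Rightarrow> bool" where
  "neg_assoc M I X \<longleftrightarrow>
    (\<forall>A B (f :: ('i \<Rightarrow> real) \<Rightarrow> real) (g :: ('i \<Rightarrow> real) \<Rightarrow> real).
       finite A \<and> finite B \<and> A \<subseteq> I \<and> B \<subseteq> I \<and> A \<inter> B = {} \<and>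
       f \<in> borel_measurable (PiM A (\<lambda>_. borel)) \<and> g \<in> borel_measurable (PiM B (\<lambda>_. borel)) \<and>
       coord_mono A f \<and> coord_mono B g \<and>
       integrable M (\<lambda>\<omega>. f (restrict (\<lambda>i. X i \<omega>) A)) \<and>
       integrable M (\<lambda>\<omega>. g (restrict (\<lambda>i. X i \<omega>) B)) \<and>
       integrable M (\<lambda>\<omega>. f (restrict (\<lambda>i. X i \<omega>) A) * g (restrict (\<lambda>i. X i \<omega>) B))
       \<longrightarrow>
       (\<integral>\<omega>. f (restrict (\<lambda>i. X i \<omega>) A) * g (restrict (\<lambda>i. X i \<omega>) B) \<partial>M)
         - (\<integral>\<omega>. f (restrict (\<lambda>i. X i \<omega>) A) \<partial>M) * (\<integral>\<omega>. g (restrict (\<lambda>i. X i \<omega>) B) \<partial>M)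
         \<le> 0)"

end

theory Submission
  imports Defs "HOL-Real_Asymp.Real_Asymp"
begin

text \<open>Write \<open>b\<^sub>n = (2 d \<bar>n\<bar> log log \<bar>n\<bar>)\<^sup>1\<^sup>/\<^sup>2\<close>. On the event of positive probability where
  \<open>lim sup \<bar>S\<^sub>n\<bar> / b\<^sub>n < \<infinity>\<close>, inclusion--exclusion over the corners of the unit cell below \<open>n\<close>
  gives \<open>\<bar>X\<^sub>n\<bar> \<le> C b\<^sub>n\<close> for all large \<open>n\<close>. Negative association makes the events
  \<open>X\<^sub>n > c b\<^sub>n\<close> (and likewise \<open>X\<^sub>n < -c b\<^sub>n\<close>) pairwise negatively dependent, so by the
  Chung--Erdos inequality they happen for arbitrarily large \<open>n\<close> almost surely as soon as
  \<open>\<Sum>\<^sub>n P(\<bar>X\<^sub>1\<bar> > c b\<^sub>n) = \<infinity>\<close>. Hence this series converges for every \<open>c\<close>, and counting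
  the multi-indices with \<open>c b\<^sub>n < y\<close>, which are essentially lattice points under a hyperbola,
  turns its convergence into the moment condition.

  A weak law of large numbers for negatively
  associated variables (truncation plus the covariance inequality) shows
  \<open>S\<^sub>(\<^sub>k\<^sub>,\<^sub>\<dots>\<^sub>,\<^sub>k\<^sub>) / k\<^sup>d \<rightarrow> E X\<^sub>1\<close> in probability, whereas \<open>S\<^sub>(\<^sub>k\<^sub>,\<^sub>\<dots>\<^sub>,\<^sub>k\<^sub>) = o(k\<^sup>d)\<close>
  on the event above; so \<open>E X\<^sub>1 = 0\<close>.\<close>

section \<open>The iterated logarithm\<close>

lemma Log_ge_1: "1 \<le> Log x"
proof -
  have "ln (exp 1) \<le> ln (max x (exp 1))" by (rule ln_mono) auto
  then show ?thesis unfolding Log_def by simp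
qed

lemma Log_pos: "0 < Log x"
  using Log_ge_1[of x] by linarith

lemma Log_mono: "x \<le> y \<Longrightarrow> Log x \<le> Log y"
  unfolding Log_def by (intro ln_mono) (auto simp: less_max_iff_disj)

lemma Log_eq_ln: "exp 1 \<le> x \<Longrightarrow> Log x = ln x"
  unfolding Log_def by (simp add: max_absorb1)

lemma Log_Log_eq_ln_ln:
  assumes "exp (exp 1) \<le> x"
  shows "Log (Log x) = ln (ln x)"
proof -
  have "exp 1 \<le> exp (exp (1::real))" by simp
  then have "Log x = ln x" using assms by (intro Log_eq_ln) linarith
  moreover have "exp 1 \<le> ln x"
    using assms by (metis exp_gt_zero ln_exp ln_le_cancel_iff order_less_le_trans)
  ultimately show ?thesis by (simp add: Log_eq_ln)
qed

lemma Log_Log_le_Log: "Log (Log x) \<le> Log x"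
proof -
  have "Log x \<le> max x (exp 1)"
    unfolding Log_def by (metis ln_less_self exp_gt_zero less_max_iff_disj less_imp_le)
  then have "Log (Log x) \<le> Log (max x (exp 1))" by (rule Log_mono)
  then show ?thesis unfolding Log_def by (simp add: max.assoc)
qed

lemma Log_Log_over_tendsto_0: "((\<lambda>x. Log (Log x) / x) \<longlongrightarrow> 0) at_top"
proof -
  have "eventually (\<lambda>x. ln (ln x) / x = Log (Log x) / x) at_top"
    using eventually_ge_at_top[of "exp (exp 1)"] by eventually_elim (simp add: Log_Log_eq_ln_ln)
  moreover have "((\<lambda>x::real. ln (ln x) / x) \<longlongrightarrow> 0) at_top" by real_asymp
  ultimately show ?thesis by (rule Lim_transform_eventually[rotated])
qed

definition lil_scale :: "nat \<Rightarrow> nat \<Rightarrow> real" where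
  "lil_scale d k = sqrt (2 * real d * real k * Log (Log (real k)))"

lemma lil_scale_nonneg: "0 \<le> lil_scale d k"
  unfolding lil_scale_def using Log_pos[of "Log (real k)"] by simp

lemma lil_scale_pos: "1 \<le> d \<Longrightarrow> 1 \<le> k \<Longrightarrow> 0 < lil_scale d k"
  unfolding lil_scale_def using Log_pos[of "Log (real k)"] by simp

lemma mono_lil_scale: "mono (lil_scale d)"
  unfolding lil_scale_def
  by (intro monoI real_sqrt_le_mono mult_mono Log_mono) (auto intro: less_imp_le[OF Log_pos])

lemma sqrt_le_lil_scale:
  assumes "1 \<le> d"
  shows "sqrt (real k) \<le> lil_scale d k"
proof -
  have "1 * 1 \<le> 2 * real d * Log (Log (real k))"
    using assms Log_ge_1[of "Log (real k)"] by (intro mult_mono) auto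
  then have "real k * 1 \<le> real k * (2 * real d * Log (Log (real k)))"
    by (intro mult_left_mono) auto
  then show ?thesis unfolding lil_scale_def by (intro real_sqrt_le_mono) (simp add: ac_simps)
qed

lemma lil_scale_over_tendsto_0: "(\<lambda>k. lil_scale d k / real k) \<longlonglongrightarrow> 0"
proof -
  have "(\<lambda>k. Log (Log (real k)) / real k) \<longlonglongrightarrow> 0"
    by (rule filterlim_compose[OF Log_Log_over_tendsto_0 filterlim_real_sequentially])
  then have "(\<lambda>k. sqrt (2 * real d * (Log (Log (real k)) / real k))) \<longlonglongrightarrow> sqrt (2 * real d * 0)"
    by (intro tendsto_intros)
  moreover have "eventually (\<lambda>k. sqrt (2 * real d * (Log (Log (real k)) / real k))
                   = lil_scale d k / real k) sequentially"
    using eventually_ge_at_top[of "1::nat"]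
  proof eventually_elim
    case (elim k)
    have "lil_scale d k / real k = sqrt (2 * real d * real k * Log (Log (real k)) / (real k)\<^sup>2)"
      unfolding lil_scale_def by (simp add: real_sqrt_divide)
    also have "\<dots> = sqrt (2 * real d * (Log (Log (real k)) / real k))"
      using elim by (simp add: power2_eq_square)
    finally show ?case by simp
  qed
  ultimately show ?thesis by (simp add: Lim_transform_eventually)
qed

section \<open>Multi-indices and partial sums\<close>

lemma eventually_mi_at_topD:
  assumes "eventually P (mi_at_top :: ('d::finite \<Rightarrow> nat) filter)"
  obtains N where "\<And>n. \<forall>i. N \<le> n i \<Longrightarrow> P n"
proof -
  from assms obtain Q where Q: "\<forall>i\<in>UNIV. eventually (Q i) (filtercomap (\<lambda>n. n i) at_top)"
      and QP: "\<forall>n. (\<forall>i\<in>UNIV. Q i n) \<longrightarrow> P n"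
    unfolding mi_at_top_def eventually_INF_finite[of "UNIV :: 'd set", OF finite] by blast
  have "\<forall>i. \<exists>N. \<forall>n. N \<le> n i \<longrightarrow> Q i n"
    using Q by (simp add: eventually_filtercomap_at_top_linorder)
  then obtain Nf where Nf: "\<And>i n. Nf i \<le> n i \<Longrightarrow> Q i n" by metis
  have "P n" if n: "\<forall>i. Max (range Nf) \<le> n i" for n
  proof -
    have "Q i n" for i
    proof -
      have "Nf i \<le> Max (range Nf)" by (rule Max_ge) auto
      then show ?thesis using n Nf le_trans by blast
    qed
    then show ?thesis using QP by blast
  qed
  then show ?thesis by (rule that)
qed

lemma Limsup_less_infinityE:
  assumes "Limsup F f < \<infinity>"
  obtains B :: real where "0 \<le> B" "eventually (\<lambda>x. f x \<le> ereal B) F"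
proof -
  obtain B :: real where B: "0 \<le> B" "Limsup F f < ereal B"
  proof (cases "Limsup F f")
    case (real r)
    then show ?thesis using that[of "max 0 (r + 1)"] by (auto simp: max_def)
  next
    case MInf
    then show ?thesis using that[of 0] by simp
  qed (use assms in simp)
  have "eventually (\<lambda>x. f x \<le> ereal B) F"
    using Limsup_lessD[OF B(2)] by (rule eventually_mono) simp
  with B(1) show ?thesis by (rule that)
qed

lemma finite_bounded_funs: "finite {m :: 'd::finite \<Rightarrow> nat. \<forall>i. m i \<le> B}"
  using finite_set_of_finite_funs[of "UNIV :: 'd set" "{..B}" 0] by simp

lemma idx_size_ge_1: "\<forall>i. 1 \<le> n i \<Longrightarrow> 1 \<le> idx_size n"
  unfolding idx_size_def by (intro prod_ge_1) auto

lemma le_idx_size: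
  assumes "\<forall>i. 1 \<le> n i"
  shows "n i \<le> idx_size n"
proof -
  have "n i dvd idx_size n" unfolding idx_size_def by (rule dvd_prodI) auto
  then show ?thesis using idx_size_ge_1[OF assms] by (intro dvd_imp_le) auto
qed

lemma idx_size_mono: "\<forall>i. m i \<le> n i \<Longrightarrow> idx_size m \<le> idx_size n"
  unfolding idx_size_def by (intro prod_mono) auto

lemma idx_size_const: "idx_size (\<lambda>_::'d::finite. k) = k ^ CARD('d)"
  unfolding idx_size_def by simp

lemma idx_size_scale: "idx_size (\<lambda>i::'d::finite. N * m i) = N ^ CARD('d) * idx_size m"
  unfolding idx_size_def by (simp add: prod.distrib)

definition index_box :: "('d \<Rightarrow> nat) \<Rightarrow> ('d \<Rightarrow> nat) set" where
  "index_box n = {k. \<forall>i. 1 \<le> k i \<and> k i \<le> n i}"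

lemma partial_sum_eq_sum_index_box: "partial_sum n X \<omega> = (\<Sum>k\<in>index_box n. X k \<omega>)"
  unfolding partial_sum_def index_box_def ..

lemma finite_index_box: "finite (index_box (n :: 'd::finite \<Rightarrow> nat))"
  by (rule finite_subset[OF _ finite_bounded_funs[of "Max (range n)"]])
     (auto simp: index_box_def intro: order_trans[OF _ Max_ge])

lemma index_box_subset_pos_idx: "index_box n \<subseteq> pos_idx"
  unfolding index_box_def pos_idx_def by auto

lemma card_index_box_const: "card (index_box (\<lambda>_::'d::finite. k)) = k ^ CARD('d)"
proof -
  have "index_box (\<lambda>_::'d. k) = PiE UNIV (\<lambda>_. {1..k})"
    by (auto simp: index_box_def PiE_UNIV_domain)
  then show ?thesis by (simp add: card_PiE)
qed

definition shift_down :: "('d \<Rightarrow> nat) \<Rightarrow> 'd set \<Rightarrow> ('d \<Rightarrow> nat)" where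
  "shift_down n E = (\<lambda>i. if i \<in> E then n i - 1 else n i)"

lemma sum_Pow_alternating:
  "finite F \<Longrightarrow> (\<Sum>E\<in>Pow F. (-1::real) ^ card E) = (if F = {} then 1 else 0)"
  using prod_diff_conv_sum[of F "\<lambda>_. 1::real" "\<lambda>_. 1"] by (auto simp: power_0_left card_eq_0_iff)

text \<open>Inclusion--exclusion over the \<open>2^d\<close> corners of the unit cell below \<open>n\<close>.\<close>
lemma summand_eq_alternating_partial_sums:
  fixes n :: "'d::finite \<Rightarrow> nat"
  assumes n: "\<forall>i. 1 \<le> n i"
  shows "X n \<omega> = (\<Sum>E\<in>Pow UNIV. (-1::real) ^ card E * partial_sum (shift_down n E) X \<omega>)"
proof -
  let ?below = "\<lambda>k. {i. k i < n i}"
  have box: "index_box (shift_down n E) = {k\<in>index_box n. E \<subseteq> ?below k}" for E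
    using n unfolding index_box_def shift_down_def by (auto split: if_splits)
  have corner: "(\<Sum>E\<in>Pow UNIV. (-1::real) ^ card E * (if E \<subseteq> F then c else 0))
      = (if F = {} then c else 0)" for F :: "'d set" and c
  proof -
    have "(\<Sum>E\<in>Pow UNIV. (-1::real) ^ card E * (if E \<subseteq> F then c else 0))
        = (\<Sum>E\<in>{E\<in>Pow UNIV. E \<subseteq> F}. (-1::real) ^ card E * c)"
      by (subst sum.inter_filter) (auto intro: sum.cong)
    also have "{E\<in>Pow UNIV. E \<subseteq> F} = Pow F" by auto
    finally show ?thesis by (simp add: sum_Pow_alternating flip: sum_distrib_right)
  qed
  have "(\<Sum>E\<in>Pow UNIV. (-1::real) ^ card E * partial_sum (shift_down n E) X \<omega>)
      = (\<Sum>E\<in>Pow UNIV. \<Sum>k\<in>index_box n. (-1::real) ^ card E * (if E \<subseteq> ?below k then X k \<omega> else 0))"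
    unfolding partial_sum_eq_sum_index_box box
    by (simp add: sum.inter_filter finite_index_box sum_distrib_left)
  also have "\<dots> = (\<Sum>k\<in>index_box n. \<Sum>E\<in>Pow UNIV.
      (-1::real) ^ card E * (if E \<subseteq> ?below k then X k \<omega> else 0))"
    by (rule sum.swap)
  also have "\<dots> = (\<Sum>k\<in>index_box n. if ?below k = {} then X k \<omega> else 0)"
    by (simp only: corner)
  also have "{k \<in> index_box n. ?below k = {}} = {n}"
    using n by (auto simp: index_box_def intro!: ext) (meson le_antisym not_le)
  then have "(\<Sum>k\<in>index_box n. if ?below k = {} then X k \<omega> else 0) = X n \<omega>"
    by (simp add: sum.inter_filter[symmetric] finite_index_box)
  finally show ?thesis by simp
qed

lemma summand_bound_of_partial_sum_bound:
  fixes X :: "('d::finite \<Rightarrow> nat) \<Rightarrow> 'a \<Rightarrow> real" and b :: "nat \<Rightarrow> real"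
  assumes "mono b" "0 \<le> B"
    and bound: "\<And>n. \<forall>i. N \<le> n i \<Longrightarrow> \<bar>partial_sum n X \<omega>\<bar> \<le> B * b (idx_size n)"
    and n: "\<forall>i. N + 1 \<le> n i"
  shows "\<bar>X n \<omega>\<bar> \<le> 2 ^ CARD('d) * B * b (idx_size n)"
proof -
  have n1: "\<forall>i. 1 \<le> n i" using n by (metis add_leE le_add2 order.trans)
  have corner: "\<bar>partial_sum (shift_down n E) X \<omega>\<bar> \<le> B * b (idx_size n)" for E
  proof -
    have "\<forall>i. N \<le> shift_down n E i"
    proof
      fix i show "N \<le> shift_down n E i" using n[rule_format, of i] unfolding shift_down_def by auto
    qed
    then have "\<bar>partial_sum (shift_down n E) X \<omega>\<bar> \<le> B * b (idx_size (shift_down n E))"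
      by (rule bound)
    also have "\<dots> \<le> B * b (idx_size n)"
      using \<open>mono b\<close> \<open>0 \<le> B\<close>
      by (intro mult_left_mono monoD[of b] idx_size_mono) (auto simp: shift_down_def)
    finally show ?thesis .
  qed
  have "\<bar>X n \<omega>\<bar> = \<bar>\<Sum>E\<in>Pow UNIV. (-1::real) ^ card E * partial_sum (shift_down n E) X \<omega>\<bar>"
    using summand_eq_alternating_partial_sums[OF n1] by metis
  also have "\<dots> \<le> (\<Sum>E\<in>Pow (UNIV::'d set). \<bar>partial_sum (shift_down n E) X \<omega>\<bar>)"
    by (rule order_trans[OF sum_abs]) (simp add: abs_mult power_abs)
  also have "\<dots> \<le> (\<Sum>E\<in>Pow (UNIV::'d set). B * b (idx_size n))"
    by (rule sum_mono) (rule corner)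
  finally show ?thesis by (simp add: card_Pow)
qed

lemma partial_sum_bound_of_Limsup:
  fixes X :: "('d::finite \<Rightarrow> nat) \<Rightarrow> 'a \<Rightarrow> real"
  assumes "Limsup mi_at_top (\<lambda>n. ereal (\<bar>partial_sum n X \<omega>\<bar> / lil_scale CARD('d) (idx_size n))) < \<infinity>"
  obtains B N where "0 \<le> B" "1 \<le> N"
    "\<And>n. \<forall>i. N \<le> n i \<Longrightarrow> \<bar>partial_sum n X \<omega>\<bar> \<le> B * lil_scale CARD('d) (idx_size n)"
proof -
  obtain B where B: "0 \<le> B"
    and ev: "eventually (\<lambda>n. ereal (\<bar>partial_sum n X \<omega>\<bar> / lil_scale CARD('d) (idx_size n))
        \<le> ereal B) mi_at_top"
    using Limsup_less_infinityE[OF assms] by blast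
  obtain N where N: "\<And>n. \<forall>i. N \<le> n i \<Longrightarrow>
      ereal (\<bar>partial_sum n X \<omega>\<bar> / lil_scale CARD('d) (idx_size n)) \<le> ereal B"
    using eventually_mi_at_topD[OF ev] by blast
  have "\<bar>partial_sum n X \<omega>\<bar> \<le> B * lil_scale CARD('d) (idx_size n)" if n: "\<forall>i. max N 1 \<le> n i" for n
  proof -
    have "0 < lil_scale CARD('d) (idx_size n)"
      using n by (intro lil_scale_pos idx_size_ge_1) (auto simp: Suc_leI)
    then show ?thesis using N[of n] n by (simp add: divide_le_eq)
  qed
  then show ?thesis using B by (intro that[of B "max N 1"]) auto
qed

lemma eventually_abs_partial_sum_const_less:
  fixes X :: "('d::finite \<Rightarrow> nat) \<Rightarrow> 'a \<Rightarrow> real"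
  assumes "Limsup mi_at_top (\<lambda>n. ereal (\<bar>partial_sum n X \<omega>\<bar> / lil_scale CARD('d) (idx_size n))) < \<infinity>"
    and \<epsilon>: "0 < \<epsilon>"
  shows "eventually (\<lambda>k. \<bar>partial_sum (\<lambda>_::'d. k) X \<omega>\<bar> < \<epsilon> * real (k ^ CARD('d))) sequentially"
proof -
  define d where "d = CARD('d)"
  have d: "0 < d" unfolding d_def by simp
  obtain B N where B: "0 \<le> B" and N: "1 \<le> N"
    and bound: "\<And>n. \<forall>i. N \<le> n i \<Longrightarrow> \<bar>partial_sum n X \<omega>\<bar> \<le> B * lil_scale d (idx_size n)"
    using partial_sum_bound_of_Limsup[OF assms(1)] unfolding d_def by blast
  have "eventually (\<lambda>k::nat. k \<le> k ^ d) sequentially"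
    using eventually_ge_at_top[of "1::nat"] by eventually_elim (use d in \<open>simp add: self_le_power\<close>)
  then have "filterlim (\<lambda>k::nat. k ^ d) at_top sequentially"
    by (rule filterlim_at_top_mono[OF filterlim_ident])
  then have "(\<lambda>k. lil_scale d (k ^ d) / real (k ^ d)) \<longlonglongrightarrow> 0"
    by (rule filterlim_compose[OF lil_scale_over_tendsto_0])
  moreover have "0 < \<epsilon> / (B + 1)" using \<epsilon> B by simp
  ultimately have "eventually (\<lambda>k. lil_scale d (k ^ d) / real (k ^ d) < \<epsilon> / (B + 1)) sequentially"
    by (rule order_tendstoD)
  then show ?thesis unfolding d_def[symmetric] using eventually_ge_at_top[of N]
  proof eventually_elim
    case (elim k)
    then have k: "0 < real (k ^ d)" using N by simp
    have "\<bar>partial_sum (\<lambda>_. k) X \<omega>\<bar> \<le> B * lil_scale d (k ^ d)"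
      using bound[of "\<lambda>_. k"] elim by (simp add: idx_size_const d_def)
    also have "\<dots> \<le> (B + 1) * lil_scale d (k ^ d)"
      using lil_scale_nonneg by (intro mult_right_mono) auto
    also have "\<dots> < \<epsilon> * real (k ^ d)"
      using elim k B by (simp add: field_simps)
    finally show ?case .
  qed
qed

section \<open>Lattice points under a hyperbola\<close>

definition hyperbola_points :: "'d set \<Rightarrow> real \<Rightarrow> ('d \<Rightarrow> nat) set" where
  "hyperbola_points I K = {m. (\<forall>i. 1 \<le> m i) \<and> (\<forall>i. i \<notin> I \<longrightarrow> m i = 1) \<and> real (\<Prod>i\<in>I. m i) \<le> K}"

lemma finite_hyperbola_points: "finite (hyperbola_points I (K :: real) :: ('d::finite \<Rightarrow> nat) set)"
proof (rule finite_subset[OF _ finite_bounded_funs[of "max 1 (nat \<lceil>K\<rceil>)"]], safe)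
  fix m :: "'d \<Rightarrow> nat" and i assume m: "m \<in> hyperbola_points I K"
  show "m i \<le> max 1 (nat \<lceil>K\<rceil>)"
  proof (cases "i \<in> I")
    case True
    have "m i dvd (\<Prod>j\<in>I. m j)" using True by (intro dvd_prodI) auto
    moreover have "0 < (\<Prod>j\<in>I. m j)" using m by (auto simp: hyperbola_points_def Suc_le_eq)
    ultimately have "m i \<le> (\<Prod>j\<in>I. m j)" by (rule dvd_imp_le)
    moreover have "real (\<Prod>j\<in>I. m j) \<le> K" using m by (simp add: hyperbola_points_def)
    ultimately have "real (m i) \<le> K" by (meson of_nat_le_iff order.trans)
    then show ?thesis by linarith
  next
    case False
    then show ?thesis using m by (simp add: hyperbola_points_def)
  qed
qed

lemma card_hyperbola_points_empty: "1 \<le> K \<Longrightarrow> card (hyperbola_points {} K) = 1"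
proof -
  assume "1 \<le> K"
  then have eq: "hyperbola_points {} K = {\<lambda>_. 1}" by (auto simp: hyperbola_points_def)
  show ?thesis unfolding eq by simp
qed

text \<open>Slicing by the value \<open>t\<close> of the new coordinate \<open>j\<close>.\<close>
lemma sum_card_hyperbola_points_le:
  fixes I :: "'d::finite set"
  assumes "j \<notin> I"
  shows "(\<Sum>t=1..T. card (hyperbola_points I (K / real t))) \<le> card (hyperbola_points (insert j I) K)"
proof -
  define A where "A t = (\<lambda>m. m(j:=t)) ` hyperbola_points I (K / real t)" for t
  have card_A: "card (A t) = card (hyperbola_points I (K / real t))" for t
    unfolding A_def using assms
    by (intro card_image inj_onI) (metis (mono_tags, lifting) hyperbola_points_def fun_upd_idem
        mem_Collect_eq fun_upd_upd)
  have A_sub: "A t \<subseteq> hyperbola_points (insert j I) K" if t: "1 \<le> t" for t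
  proof
    fix m assume "m \<in> A t"
    then obtain m0 where m0: "m0 \<in> hyperbola_points I (K / real t)" and m: "m = m0(j:=t)"
      unfolding A_def by auto
    have "(\<Prod>i\<in>I. m i) = (\<Prod>i\<in>I. m0 i)" using assms by (intro prod.cong) (auto simp: m)
    then have "(\<Prod>i\<in>insert j I. m i) = t * (\<Prod>i\<in>I. m0 i)"
      using assms by (simp add: m)
    moreover have "real (\<Prod>i\<in>I. m0 i) \<le> K / real t" using m0 by (simp add: hyperbola_points_def)
    ultimately have "real (\<Prod>i\<in>insert j I. m i) \<le> K"
      using t by (simp add: field_simps mult.commute)
    then show "m \<in> hyperbola_points (insert j I) K"
      using m0 t by (auto simp: hyperbola_points_def m)
  qed
  then have "(\<Union>t\<in>{1..T}. A t) \<subseteq> hyperbola_points (insert j I) K" by (intro UN_least) auto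
  moreover have "disjoint_family_on A {1..T}"
    unfolding A_def disjoint_family_on_def by (auto dest: fun_cong[of _ _ j])
  ultimately have "card (\<Union>t\<in>{1..T}. A t) \<le> card (hyperbola_points (insert j I) K)"
    by (intro card_mono finite_hyperbola_points)
  also have "card (\<Union>t\<in>{1..T}. A t) = (\<Sum>t=1..T. card (A t))"
    using \<open>disjoint_family_on A {1..T}\<close>
    by (intro card_UN_disjoint) (auto simp: A_def finite_hyperbola_points disjoint_family_on_def)
  finally show ?thesis by (simp add: card_A)
qed

lemma card_hyperbola_points_singleton:
  assumes "1 \<le> K"
  shows "K / 2 \<le> real (card (hyperbola_points {j::'d::finite} K))"
proof -
  have "card (hyperbola_points ({}::'d set) (K / real t)) = 1" if t: "t \<in> {1..nat \<lfloor>K\<rfloor>}" for t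
  proof (rule card_hyperbola_points_empty)
    have "real t \<le> K" using t assms by (simp add: le_nat_floor) linarith
    then show "1 \<le> K / real t" using t by simp
  qed
  then have "nat \<lfloor>K\<rfloor> \<le> card (hyperbola_points {j} K)"
    using sum_card_hyperbola_points_le[where j=j and I="{}" and T="nat \<lfloor>K\<rfloor>" and K=K] by simp
  then have "real (nat \<lfloor>K\<rfloor>) \<le> real (card (hyperbola_points {j} K))" by simp
  moreover have "K / 2 \<le> real (nat \<lfloor>K\<rfloor>)"
  proof -
    have "1 \<le> real_of_int \<lfloor>K\<rfloor>" using assms by simp
    then have "real (nat \<lfloor>K\<rfloor>) = real_of_int \<lfloor>K\<rfloor>" by simp
    moreover have "K - 1 < real_of_int \<lfloor>K\<rfloor>" by linarith
    ultimately show ?thesis using \<open>1 \<le> real_of_int \<lfloor>K\<rfloor>\<close> by linarith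
  qed
  ultimately show ?thesis by linarith
qed

lemma half_ln_le_harm_sqrt:
  assumes "1 \<le> K"
  shows "ln K / 2 \<le> harm (nat \<lfloor>sqrt K\<rfloor>)"
proof -
  have "ln K / 2 = ln (sqrt K)" using assms by (simp add: ln_sqrt)
  also have "\<dots> \<le> ln (real (nat \<lfloor>sqrt K\<rfloor>) + 1)"
  proof (rule ln_mono)
    show "0 < sqrt K" "sqrt K \<le> real (nat \<lfloor>sqrt K\<rfloor>) + 1" using assms by auto
  qed
  also have "\<dots> \<le> harm (nat \<lfloor>sqrt K\<rfloor>)" by (rule ln_le_harm)
  finally show ?thesis .
qed

lemma half_ln_le_ln_divide:
  assumes "1 \<le> K" "1 \<le> t" "t \<le> sqrt K"
  shows "1 \<le> K / t" "ln K / 2 \<le> ln (K / t)"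
proof -
  have "sqrt K * t \<le> sqrt K * sqrt K" using assms by (intro mult_left_mono) auto
  also have "\<dots> = K" using assms by simp
  finally have Kt: "sqrt K \<le> K / t" using assms by (simp add: field_simps)
  have sqrt_K: "1 \<le> sqrt K" using assms by simp
  then show "1 \<le> K / t" using Kt by linarith
  have "ln K / 2 = ln (sqrt K)" using assms by (simp add: ln_sqrt)
  also have "\<dots> \<le> ln (K / t)" using Kt sqrt_K by (intro ln_mono) auto
  finally show "ln K / 2 \<le> ln (K / t)" .
qed

text \<open>A crude form of \<open>#{m : m\<^sub>1 \<cdots> m\<^sub>k \<le> K} \<sim> K (ln K)\<^bsup>k-1\<^esup>/(k-1)!\<close>, by induction
  on \<open>k\<close>: every slice \<open>m\<^sub>k = t\<close> with \<open>t \<le> \<surd>K\<close> has \<open>ln (K/t) \<ge> ln K / 2\<close>.\<close>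
lemma card_hyperbola_points_ge:
  assumes "I \<noteq> {}" "1 \<le> K"
  shows "K * ln K ^ (card I - 1) / 2 ^ (card I * card I)
      \<le> real (card (hyperbola_points (I::'d::finite set) K))"
  using finite[of I] assms
proof (induction I arbitrary: K rule: finite_ne_induct)
  case (singleton j)
  then show ?case using card_hyperbola_points_singleton[of K j] by simp
next
  case (insert j I)
  define k where "k = card I"
  have k: "1 \<le> k" "card (insert j I) = k + 1" using insert.hyps
    by (auto simp: k_def Suc_leI card_gt_0_iff)
  define T where "T = nat \<lfloor>sqrt K\<rfloor>"
  let ?c = "K * (ln K / 2) ^ (k - 1) / 2 ^ (k * k)"
  have "?c / real t \<le> real (card (hyperbola_points I (K / real t)))" if t: "t \<in> {1..T}" for t
  proof -
    have "real t \<le> sqrt K" using t insert.prems unfolding T_def by (simp add: le_nat_floor) linarith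
    then have Kt: "1 \<le> K / real t" "ln K / 2 \<le> ln (K / real t)"
      using half_ln_le_ln_divide[of K "real t"] t insert.prems by auto
    then have "(K / real t) * (ln K / 2) ^ (k - 1) / 2 ^ (k * k)
        \<le> (K / real t) * ln (K / real t) ^ (k - 1) / 2 ^ (k * k)"
      using insert.prems by (intro divide_right_mono mult_left_mono power_mono) auto
    also have "\<dots> \<le> real (card (hyperbola_points I (K / real t)))"
      using insert.IH[OF Kt(1)] by (simp add: k_def)
    finally show ?thesis by (simp add: field_simps)
  qed
  then have "?c * harm T \<le> (\<Sum>t=1..T. real (card (hyperbola_points I (K / real t))))"
    unfolding harm_def sum_distrib_left by (intro sum_mono) (auto simp: field_simps)
  also have "\<dots> \<le> real (card (hyperbola_points (insert j I) K))"
    using sum_card_hyperbola_points_le[OF insert.hyps(3), where T=T and K=K]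
      by (simp flip: of_nat_sum)
  finally have slices: "?c * harm T \<le> real (card (hyperbola_points (insert j I) K))" .
  have "K * ln K ^ k / 2 ^ ((k + 1) * (k + 1)) \<le> K * ln K ^ k / 2 ^ (k * k + k)"
    using insert.prems by (intro divide_left_mono mult_nonneg_nonneg power_increasing) auto
  also have "\<dots> = ?c * (ln K / 2)"
  proof -
    have "ln K ^ k = ln K ^ (k - 1) * ln K" "(2::real) ^ k = 2 ^ (k - 1) * 2"
      using k(1) by (metis Suc_diff_le diff_Suc_1 power_Suc2)+
    then show ?thesis by (simp add: power_add power_divide field_simps)
  qed
  also have "\<dots> \<le> ?c * harm T"
    unfolding T_def using insert.prems by (intro mult_left_mono half_ln_le_harm_sqrt) auto
  finally show ?case using slices k(2) by simp
qed

section \<open>Counting the thresholds exceeded by a value\<close>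

definition lil_moment :: "nat \<Rightarrow> real \<Rightarrow> real" where
  "lil_moment d y = y\<^sup>2 * Log \<bar>y\<bar> ^ (d - 1) / Log (Log \<bar>y\<bar>)"

lemma lil_moment_nonneg: "0 \<le> lil_moment d y"
  unfolding lil_moment_def using Log_pos[of "\<bar>y\<bar>"] Log_pos[of "Log \<bar>y\<bar>"] by simp

lemma abs_le_lil_moment: "\<bar>y\<bar> \<le> exp 1 + lil_moment d y"
proof (cases "\<bar>y\<bar> \<le> exp 1")
  case True
  then show ?thesis using lil_moment_nonneg[of d y] by linarith
next
  case False
  then have y: "exp 1 \<le> \<bar>y\<bar>" "0 < \<bar>y\<bar>" using exp_gt_zero[of 1] by linarith+
  have LL: "Log (Log \<bar>y\<bar>) \<le> \<bar>y\<bar>"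
    using Log_Log_le_Log[of "\<bar>y\<bar>"] Log_eq_ln[OF y(1)] ln_less_self[OF y(2)] by linarith
  have "y\<^sup>2 / \<bar>y\<bar> = \<bar>y\<bar> * \<bar>y\<bar> / \<bar>y\<bar>" by (simp add: power2_eq_square)
  also have "\<dots> = \<bar>y\<bar>" by (rule nonzero_mult_div_cancel_right) (use y(2) in simp)
  finally have "\<bar>y\<bar> = y\<^sup>2 / \<bar>y\<bar>" ..
  also have "\<dots> \<le> y\<^sup>2 / Log (Log \<bar>y\<bar>)" using LL Log_pos[of "Log \<bar>y\<bar>"] y(2)
    by (intro divide_left_mono) auto
  also have "\<dots> \<le> lil_moment d y"
    unfolding lil_moment_def
  proof (rule divide_right_mono)
    have "y\<^sup>2 * 1 \<le> y\<^sup>2 * Log \<bar>y\<bar> ^ (d - 1)"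
      by (intro mult_left_mono one_le_power Log_ge_1) simp
    then show "y\<^sup>2 \<le> y\<^sup>2 * Log \<bar>y\<bar> ^ (d - 1)" by simp
  qed (simp add: less_imp_le[OF Log_pos])
  finally show ?thesis using exp_gt_zero[of 1] by linarith
qed

lemma lil_moment_le:
  assumes "\<bar>y\<bar> \<le> z"
  shows "lil_moment d y \<le> z\<^sup>2 * Log z ^ (d - 1)"
proof -
  have "lil_moment d y \<le> y\<^sup>2 * Log \<bar>y\<bar> ^ (d - 1) / 1"
    unfolding lil_moment_def using Log_ge_1[of "Log \<bar>y\<bar>"] Log_pos[of "\<bar>y\<bar>"]
    by (intro divide_left_mono) auto
  also have "\<dots> = y\<^sup>2 * Log \<bar>y\<bar> ^ (d - 1)" by simp
  also have "\<dots> \<le> z\<^sup>2 * Log z ^ (d - 1)"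
  proof (intro mult_mono)
    have "\<bar>y\<bar>\<^sup>2 \<le> z\<^sup>2" using assms by (intro power_mono) auto
    then show "y\<^sup>2 \<le> z\<^sup>2" by simp
    show "Log \<bar>y\<bar> ^ (d - 1) \<le> Log z ^ (d - 1)"
      using assms by (intro power_mono Log_mono) (auto intro: less_imp_le[OF Log_pos])
  qed (auto intro: less_imp_le[OF Log_pos] zero_le_power)
  finally show ?thesis .
qed

text \<open>Integrating \<open>card (lil_below c N \<bar>Y\<bar>)\<close> over the law of \<open>Y\<close> gives
  \<open>\<Sum>\<^sub>n\<^sub>\<ge>\<^sub>N P(\<bar>Y\<bar> > c b\<^sub>n)\<close>.\<close>
definition lil_below :: "real \<Rightarrow> nat \<Rightarrow> real \<Rightarrow> ('d::finite \<Rightarrow> nat) set" where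
  "lil_below c N y = {n. (\<forall>i. N \<le> n i) \<and> c * lil_scale CARD('d) (idx_size n) < y}"

lemma idx_size_lt_of_lil_below:
  fixes n :: "'d::finite \<Rightarrow> nat"
  assumes c: "0 < c" and N: "1 \<le> N" and n: "n \<in> lil_below c N y"
  shows "real (idx_size n) < (y / c)\<^sup>2"
proof -
  have "sqrt (real (idx_size n)) \<le> lil_scale CARD('d) (idx_size n)"
    by (rule sqrt_le_lil_scale) (simp add: Suc_leI)
  then have "c * sqrt (real (idx_size n)) \<le> c * lil_scale CARD('d) (idx_size n)"
    using c by (intro mult_left_mono) auto
  also have "\<dots> < y" using n by (simp add: lil_below_def)
  finally have "c * sqrt (real (idx_size n)) < y" .
  then have "sqrt (real (idx_size n)) < y / c" using c by (simp add: field_simps)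
  then have "(sqrt (real (idx_size n)))\<^sup>2 < (y / c)\<^sup>2" by (intro power_strict_mono) auto
  then show ?thesis by simp
qed

lemma finite_lil_below:
  assumes c: "0 < c" and N: "1 \<le> N"
  shows "finite (lil_below c N y :: ('d::finite \<Rightarrow> nat) set)"
proof (rule finite_subset[OF _ finite_bounded_funs[of "nat \<lceil>(y / c)\<^sup>2\<rceil>"]], safe)
  fix n :: "'d \<Rightarrow> nat" and i assume n: "n \<in> lil_below c N y"
  have "\<forall>i. 1 \<le> n i"
  proof
    fix j
    have "N \<le> n j" using n by (simp add: lil_below_def)
    then show "1 \<le> n j" using N by linarith
  qed
  then have "n i \<le> idx_size n" by (rule le_idx_size)
  then show "n i \<le> nat \<lceil>(y / c)\<^sup>2\<rceil>" using idx_size_lt_of_lil_below[OF c N n] by linarith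
qed

lemma mono_card_lil_below:
  assumes "0 < c" "1 \<le> N"
  shows "mono (\<lambda>y. real (card (lil_below c N y :: ('d::finite \<Rightarrow> nat) set)))"
  by (intro monoI of_nat_mono card_mono finite_lil_below assms) (auto simp: lil_below_def)

lemma exp_exp_leD:
  fixes y :: real
  assumes "exp (exp 1) \<le> y"
  shows "1 < y" and "exp 1 \<le> y" and "exp 1 \<le> ln y" and "1 \<le> ln (ln y)"
proof -
  have "1 < exp (1::real)" "exp 1 \<le> exp (exp (1::real))" by simp_all
  then show "1 < y" "exp 1 \<le> y" using assms by linarith+
  show lny: "exp 1 \<le> ln y"
    using assms by (metis exp_gt_zero ln_exp ln_le_cancel_iff order_less_le_trans)
  have "ln (exp 1) \<le> ln (ln y)" by (rule ln_mono[OF lny exp_gt_zero])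
  then show "1 \<le> ln (ln y)" by simp
qed

lemma eventually_ln_ln_bounds:
  assumes "0 < A" "0 < L"
  shows "eventually (\<lambda>y::real. exp (exp 1) \<le> y \<and> 1 \<le> A * ln (ln y) \<and> L * ln (ln y) \<le> y) at_top"
proof (intro eventually_conj)
  show "eventually (\<lambda>y::real. exp (exp 1) \<le> y) at_top" by (rule eventually_ge_at_top)
  have "filterlim (\<lambda>y::real. ln (ln y)) at_top at_top" by real_asymp
  then have "eventually (\<lambda>y. 1 / A \<le> ln (ln y)) at_top" by (simp add: filterlim_at_top)
  then show "eventually (\<lambda>y. 1 \<le> A * ln (ln y)) at_top"
    by (rule eventually_mono) (use assms in \<open>simp add: field_simps\<close>)
  have "((\<lambda>y::real. ln (ln y) / y) \<longlongrightarrow> 0) at_top" by real_asymp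
  moreover have "0 < 1 / L" using assms by simp
  ultimately have "eventually (\<lambda>y. ln (ln y) / y < 1 / L) at_top" by (rule order_tendstoD)
  then show "eventually (\<lambda>y. L * ln (ln y) \<le> y) at_top"
    using eventually_gt_at_top[of 0]
    by eventually_elim (use assms in \<open>simp add: field_simps\<close>)
qed

lemma lil_scale_lt_of_le:
  assumes c: "0 < c" and d: "1 \<le> d" and y: "exp (exp 1) \<le> y"
    and a: "1 \<le> 4 * real d * c\<^sup>2 * ln (ln y)"
    and k: "real k \<le> y\<^sup>2 / (4 * real d * c\<^sup>2 * ln (ln y))"
  shows "c * lil_scale d k < y"
proof -
  note y1 = exp_exp_leD(1)[OF y] and lny = exp_exp_leD(3)[OF y]
    and lnln = exp_exp_leD(4)[OF y]
  have "0 < 4 * real d * c\<^sup>2 * ln (ln y)" using a by linarith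
  then have "y\<^sup>2 / (4 * real d * c\<^sup>2 * ln (ln y)) \<le> y\<^sup>2 / 1"
    using a by (intro divide_left_mono) auto
  then have "real k \<le> y\<^sup>2" using k by simp
  then have "Log (Log (real k)) \<le> Log (Log (y\<^sup>2))" by (intro Log_mono)
  also have "\<dots> = ln 2 + ln (ln y)"
  proof -
    have "y * 1 \<le> y * y" using y1 by (intro mult_left_mono) auto
    then have "exp (exp 1) \<le> y\<^sup>2" using y by (simp add: power2_eq_square)
    then show ?thesis using y1 lny by (simp add: Log_Log_eq_ln_ln ln_realpow ln_mult)
  qed
  finally have LL: "Log (Log (real k)) < 2 * ln (ln y)" using ln_2_less_1 lnln by linarith
  have "c\<^sup>2 * (2 * real d * real k * Log (Log (real k)))
      \<le> c\<^sup>2 * (2 * real d * (y\<^sup>2 / (4 * real d * c\<^sup>2 * ln (ln y))) * Log (Log (real k)))"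
    using k d Log_pos[of "Log (real k)"] by (intro mult_left_mono mult_right_mono) auto
  also have "\<dots> = y\<^sup>2 * Log (Log (real k)) / (2 * ln (ln y))"
    using c d lnln by (simp add: field_simps)
  also have "\<dots> < y\<^sup>2 * (2 * ln (ln y)) / (2 * ln (ln y))"
  proof -
    have "1 < exp (1::real)" by simp
    then have "1 < ln y" using lny by linarith
    then show ?thesis using LL lnln y1
      by (intro divide_strict_right_mono mult_strict_left_mono) auto
  qed
  also have "\<dots> = y\<^sup>2" using lnln by simp
  finally have "sqrt (c\<^sup>2 * (2 * real d * real k * Log (Log (real k)))) < sqrt (y\<^sup>2)"
    by (rule real_sqrt_less_mono)
  then show ?thesis using c y1 unfolding lil_scale_def by (simp add: real_sqrt_mult)
qed

lemma card_hyperbola_points_le_card_lil_below: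
  fixes K :: real
  assumes c: "0 < c" and N: "1 \<le> N"
    and small: "\<And>k. real k \<le> real (N ^ CARD('d)) * K \<Longrightarrow> c * lil_scale CARD('d) k < y"
  shows "card (hyperbola_points (UNIV :: 'd set) K)
      \<le> card (lil_below c N y :: ('d::finite \<Rightarrow> nat) set)"
proof -
  let ?scale = "\<lambda>m::'d \<Rightarrow> nat. (\<lambda>i. N * m i)"
  have inj: "inj_on ?scale (hyperbola_points UNIV K)"
    using N by (auto intro!: inj_onI ext dest: fun_cong)
  have mem: "?scale m \<in> lil_below c N y" if m: "m \<in> hyperbola_points UNIV K" for m
  proof -
    have m1: "\<forall>i. 1 \<le> m i" and "real (idx_size m) \<le> K"
      using m by (auto simp: hyperbola_points_def idx_size_def)
    then have "real (idx_size (?scale m)) \<le> real (N ^ CARD('d)) * K"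
      unfolding idx_size_scale by (simp add: mult_left_mono)
    then have "c * lil_scale CARD('d) (idx_size (?scale m)) < y" by (rule small)
    moreover have "\<forall>i. N \<le> N * m i" using m1 by simp
    ultimately show ?thesis unfolding lil_below_def by blast
  qed
  then have "?scale ` hyperbola_points UNIV K \<subseteq> lil_below c N y" by auto
  with finite_lil_below[OF c N]
  have "card (?scale ` hyperbola_points UNIV K) \<le> card (lil_below c N y :: ('d \<Rightarrow> nat) set)"
    by (rule card_mono)
  then show ?thesis using card_image[OF inj] by simp
qed

text \<open>For large \<open>y\<close>, scaling the hyperbola points below \<open>K = y\<^sup>2 / (L ln ln y)\<close> by \<open>N\<close> lands in
  \<open>lil_below c N y\<close>; the bound \<open>K (ln K)\<^bsup>d-1\<^esup>\<close> on their number is \<open>lil_moment d y / L\<close>.\<close>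
lemma lil_moment_le_card_lil_below_large:
  fixes c :: real and N :: nat
  defines "d \<equiv> CARD('d::finite)"
  defines "L \<equiv> 4 * real d * c\<^sup>2 * real N ^ d"
  assumes c: "0 < c" and N: "1 \<le> N" and y: "exp (exp 1) \<le> y"
    and a: "1 \<le> 4 * real d * c\<^sup>2 * ln (ln y)" and Ly: "L * ln (ln y) \<le> y"
  shows "lil_moment d y \<le> L * 2 ^ (d * d) * real (card (lil_below c N y :: ('d \<Rightarrow> nat) set))"
proof -
  have d: "1 \<le> d" unfolding d_def by (simp add: Suc_leI)
  have L: "0 < L" unfolding L_def using c d N by simp
  note y1 = exp_exp_leD(1)[OF y] and lny = exp_exp_leD(3)[OF y]
    and lnln = exp_exp_leD(4)[OF y]
  define K where "K = y\<^sup>2 / (L * ln (ln y))"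
  have Ky: "y \<le> K"
  proof -
    have "y * (L * ln (ln y)) \<le> y * y" using Ly y1 by (intro mult_left_mono) auto
    then show ?thesis unfolding K_def using L lnln by (simp add: le_divide_eq power2_eq_square)
  qed
  have NK: "real (N ^ d) * K = y\<^sup>2 / (4 * real d * c\<^sup>2 * ln (ln y))"
    unfolding K_def L_def using N by (simp add: field_simps)
  have "c * lil_scale d k < y" if "real k \<le> real (N ^ d) * K" for k
    using c d y a that unfolding NK by (rule lil_scale_lt_of_le)
  then have count: "card (hyperbola_points (UNIV :: 'd set) K)
      \<le> card (lil_below c N y :: ('d \<Rightarrow> nat) set)"
    using c N unfolding d_def by (intro card_hyperbola_points_le_card_lil_below)
  have "Log \<bar>y\<bar> = ln y" using y1 exp_exp_leD(2)[OF y] by (simp add: Log_eq_ln)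
  moreover have "Log (Log \<bar>y\<bar>) = ln (ln y)" using y y1 by (simp add: Log_Log_eq_ln_ln)
  ultimately have "lil_moment d y = L * K * ln y ^ (d - 1)"
    unfolding lil_moment_def K_def using L lnln by (simp add: field_simps)
  also have "\<dots> \<le> L * K * ln K ^ (d - 1)"
    using L Ky y1 lny by (intro mult_left_mono power_mono ln_mono) auto
  also have "\<dots> = L * 2 ^ (d * d) * (K * ln K ^ (d - 1) / 2 ^ (d * d))" by simp
  also have "\<dots> \<le> L * 2 ^ (d * d) * real (card (hyperbola_points (UNIV :: 'd set) K))"
    using card_hyperbola_points_ge[of "UNIV :: 'd set" K] Ky y1 L unfolding d_def
    by (intro mult_left_mono) auto
  also have "\<dots> \<le> L * 2 ^ (d * d) * real (card (lil_below c N y :: ('d \<Rightarrow> nat) set))"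
    using count L by (intro mult_left_mono) auto
  finally show ?thesis .
qed

lemma lil_moment_le_card_lil_below:
  fixes c :: real and N :: nat
  assumes c: "0 < c" and N: "1 \<le> N"
  obtains C0 C1 where "0 \<le> C0" "0 \<le> C1"
    "\<And>y. lil_moment CARD('d) y \<le> C0
        + C1 * real (card (lil_below c N \<bar>y\<bar> :: ('d::finite \<Rightarrow> nat) set))"
proof -
  define d where "d = CARD('d)"
  define A where "A = 4 * real d * c\<^sup>2"
  define L where "L = A * real N ^ d"
  have A: "0 < A" unfolding A_def d_def using c by simp
  have L: "0 < L" unfolding L_def using A N by simp
  obtain Y where Y: "\<And>y. Y \<le> y \<Longrightarrow> exp (exp 1) \<le> y \<and> 1 \<le> A * ln (ln y) \<and> L * ln (ln y) \<le> y"
    using eventually_ln_ln_bounds[OF A L] by (auto simp: eventually_at_top_linorder)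
  define C0 where "C0 = (max Y 0)\<^sup>2 * Log (max Y 0) ^ (d - 1)"
  have C0: "0 \<le> C0" unfolding C0_def using Log_pos[of "max Y 0"] by simp
  have "lil_moment d y \<le> C0
      + L * 2 ^ (d * d) * real (card (lil_below c N \<bar>y\<bar> :: ('d \<Rightarrow> nat) set))" for y
  proof (cases "Y \<le> \<bar>y\<bar>")
    case True
    then have "lil_moment d \<bar>y\<bar>
        \<le> L * 2 ^ (d * d) * real (card (lil_below c N \<bar>y\<bar> :: ('d \<Rightarrow> nat) set))"
      using Y[OF True] c N unfolding L_def A_def d_def
        by (intro lil_moment_le_card_lil_below_large) auto
    then show ?thesis using C0 by (simp add: lil_moment_def)
  next
    case False
    then have "lil_moment d y \<le> C0" unfolding C0_def by (intro lil_moment_le) auto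
    moreover have "0 \<le> L * 2 ^ (d * d) * real (card (lil_below c N \<bar>y\<bar> :: ('d \<Rightarrow> nat) set))"
      using L by simp
    ultimately show ?thesis by linarith
  qed
  then show ?thesis using C0 L by (intro that[of C0 "L * 2 ^ (d * d)"]) (simp_all add: d_def)
qed

section \<open>Truncation and unbounded sums\<close>

definition clip :: "real \<Rightarrow> real \<Rightarrow> real" where
  "clip t x = max (- t) (min t x)"

lemma mono_clip: "mono (clip t)"
  unfolding clip_def mono_def by auto

lemma abs_clip_le: "0 \<le> t \<Longrightarrow> \<bar>clip t x\<bar> \<le> t"
  unfolding clip_def by auto

lemma borel_measurable_clip[measurable]: "clip t \<in> borel_measurable borel"
  unfolding clip_def by measurable

lemma abs_sub_clip_le: "0 \<le> t \<Longrightarrow> \<bar>x - clip t x\<bar> \<le> \<bar>x\<bar>"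
  unfolding clip_def by auto

lemma clip_eq_self: "\<bar>x\<bar> \<le> t \<Longrightarrow> clip t x = x"
  unfolding clip_def by auto

lemma abs_sum_sub_le_clip:
  fixes x :: "'i \<Rightarrow> real"
  assumes "finite B"
  shows "\<bar>(\<Sum>n\<in>B. x n) - real (card B) * \<mu>\<bar>
    \<le> \<bar>\<Sum>n\<in>B. clip t (x n) - m\<bar> + (\<Sum>n\<in>B. \<bar>x n - clip t (x n)\<bar>) + real (card B) * \<bar>m - \<mu>\<bar>"
proof -
  have "(\<Sum>n\<in>B. x n) - real (card B) * \<mu>
      = (\<Sum>n\<in>B. clip t (x n) - m) + (\<Sum>n\<in>B. x n - clip t (x n)) + real (card B) * (m - \<mu>)"
    by (simp add: sum_subtractf algebra_simps)
  also have "\<bar>\<dots>\<bar> \<le> \<bar>\<Sum>n\<in>B. clip t (x n) - m\<bar> + \<bar>\<Sum>n\<in>B. x n - clip t (x n)\<bar>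
      + \<bar>real (card B) * (m - \<mu>)\<bar>"
    by arith
  also have "\<bar>\<Sum>n\<in>B. x n - clip t (x n)\<bar> \<le> (\<Sum>n\<in>B. \<bar>x n - clip t (x n)\<bar>)"
    by (rule sum_abs)
  finally show ?thesis by (simp add: abs_mult)
qed

lemma integral_abs_sub_clip_tendsto_0:
  fixes Y :: "'a \<Rightarrow> real"
  assumes "integrable M Y"
  shows "(\<lambda>t::nat. \<integral>\<omega>. \<bar>Y \<omega> - clip (real t) (Y \<omega>)\<bar> \<partial>M) \<longlonglongrightarrow> 0"
proof -
  have Y[measurable]: "Y \<in> borel_measurable M" using assms by simp
  have "(\<lambda>t::nat. \<integral>\<omega>. \<bar>Y \<omega> - clip (real t) (Y \<omega>)\<bar> \<partial>M) \<longlonglongrightarrow> (\<integral>\<omega>. 0 \<partial>M)"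
  proof (rule integral_dominated_convergence[where w = "\<lambda>\<omega>. \<bar>Y \<omega>\<bar>"])
    show "AE \<omega> in M. (\<lambda>t. \<bar>Y \<omega> - clip (real t) (Y \<omega>)\<bar>) \<longlonglongrightarrow> 0"
    proof (rule AE_I2, rule tendsto_eventually)
      fix \<omega>
      show "eventually (\<lambda>t. \<bar>Y \<omega> - clip (real t) (Y \<omega>)\<bar> = 0) sequentially"
        using eventually_ge_at_top[of "nat \<lceil>\<bar>Y \<omega>\<bar>\<rceil>"]
        by eventually_elim (simp add: clip_eq_self le_nat_iff ceiling_le_iff)
    qed
  qed (use assms abs_sub_clip_le in auto)
  then show ?thesis by simp
qed

lemma SUP_card_truncated_level_set:
  fixes t :: "'i \<Rightarrow> real"
  assumes fin: "\<And>y. finite {n\<in>R. t n < y}"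
  shows "(SUP K::nat. ennreal (card {n\<in>{n\<in>R. t n < real K}. t n < y}))
      = ennreal (card {n\<in>R. t n < y})"
proof (rule antisym)
  show "(SUP K. ennreal (card {n\<in>{n\<in>R. t n < real K}. t n < y})) \<le> ennreal (card {n\<in>R. t n < y})"
    by (intro SUP_least ennreal_leI of_nat_mono card_mono fin) auto
  have "{n\<in>R. t n < y} = {n\<in>{n\<in>R. t n < real (nat \<lceil>y\<rceil>)}. t n < y}" by auto linarith
  then have "ennreal (card {n\<in>R. t n < y})
      = ennreal (card {n\<in>{n\<in>R. t n < real (nat \<lceil>y\<rceil>)}. t n < y})" by simp
  also have "\<dots> \<le> (SUP K. ennreal (card {n\<in>{n\<in>R. t n < real K}. t n < y}))" by (rule SUP_upper) simp
  finally show "ennreal (card {n\<in>R. t n < y})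
      \<le> (SUP K. ennreal (card {n\<in>{n\<in>R. t n < real K}. t n < y}))" .
qed

lemma sums_unbounded_disj:
  fixes f g :: "'i \<Rightarrow> real"
  assumes "\<And>B. \<exists>F. finite F \<and> F \<subseteq> R \<and> B < (\<Sum>n\<in>F. f n + g n)"
  shows "(\<forall>B. \<exists>F. finite F \<and> F \<subseteq> R \<and> B < (\<Sum>n\<in>F. f n))
    \<or> (\<forall>B. \<exists>F. finite F \<and> F \<subseteq> R \<and> B < (\<Sum>n\<in>F. g n))"
proof (rule disjCI)
  assume "\<not> (\<forall>B. \<exists>F. finite F \<and> F \<subseteq> R \<and> B < (\<Sum>n\<in>F. g n))"
  then obtain B1 where B1: "\<And>F. finite F \<Longrightarrow> F \<subseteq> R \<Longrightarrow> (\<Sum>n\<in>F. g n) \<le> B1"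
    by (auto simp: not_less)
  show "\<forall>B. \<exists>F. finite F \<and> F \<subseteq> R \<and> B < (\<Sum>n\<in>F. f n)"
  proof
    fix B
    obtain F where F: "finite F" "F \<subseteq> R" "B + B1 < (\<Sum>n\<in>F. f n + g n)"
      using assms[of "B + B1"] by blast
    then show "\<exists>F. finite F \<and> F \<subseteq> R \<and> B < (\<Sum>n\<in>F. f n)"
      using B1[OF F(1,2)] by (intro exI[of _ F]) (simp add: sum.distrib)
  qed
qed

section \<open>Bounds in probability spaces\<close>

context prob_space
begin

lemma integrable_bounded_real:
  fixes f :: "'a \<Rightarrow> real"
  assumes "f \<in> borel_measurable M" "\<And>x. \<bar>f x\<bar> \<le> C"
  shows "integrable M f"
  using assms by (intro integrable_const_bound[where B=C]) auto

lemma abs_integral_le: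
  fixes f :: "'a \<Rightarrow> real"
  assumes "\<And>x. \<bar>f x\<bar> \<le> C"
  shows "\<bar>\<integral>x. f x \<partial>M\<bar> \<le> C"
proof (cases "integrable M f")
  case True
  have "\<bar>\<integral>x. f x \<partial>M\<bar> \<le> (\<integral>x. \<bar>f x\<bar> \<partial>M)"
    using integral_norm_bound[of M f] by simp
  also have "\<dots> \<le> (\<integral>x. C \<partial>M)"
    using True assms by (intro integral_mono) auto
  finally show ?thesis by (simp add: prob_space)
next
  case False
  then show ?thesis using abs_ge_zero[of "f undefined"] assms[of undefined]
    by (simp add: not_integrable_integral_eq)
qed

lemma integral_indicator_comp:
  "(\<integral>\<omega>. indicat_real S (f \<omega>) \<partial>M) = prob {\<omega>\<in>space M. f \<omega> \<in> S}"
proof -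
  have "(\<integral>\<omega>. indicat_real S (f \<omega>) \<partial>M) = (\<integral>\<omega>. indicator {\<omega>\<in>space M. f \<omega> \<in> S} \<omega> \<partial>M)"
    by (intro Bochner_Integration.integral_cong) (auto simp: indicator_def)
  then show ?thesis by (simp add: Int_absorb2 subset_iff)
qed

lemma integrable_if_integrable_lil_moment:
  fixes f :: "'a \<Rightarrow> real"
  assumes "integrable M (\<lambda>\<omega>. lil_moment d (f \<omega>))" "f \<in> borel_measurable M"
  shows "integrable M f"
proof (rule Bochner_Integration.integrable_bound)
  show "integrable M (\<lambda>\<omega>. exp 1 + lil_moment d (f \<omega>))" using assms(1) by simp
  show "AE \<omega> in M. norm (f \<omega>) \<le> norm (exp 1 + lil_moment d (f \<omega>))"
    using abs_le_lil_moment lil_moment_nonneg by (intro AE_I2) (simp add: add_nonneg_nonneg)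
qed (rule assms(2))

lemma incseq_prob_gtE:
  assumes "A \<in> events" "A \<subseteq> (\<Union>K. H K)" "incseq H" "\<And>K. H K \<in> events" "q < prob A"
  obtains K where "q < prob (H K)"
proof -
  have "prob A \<le> prob (\<Union>K. H K)" using assms(1,2,4) by (intro finite_measure_mono) auto
  then have "q < prob (\<Union>K. H K)" using assms(5) by linarith
  moreover have "(\<lambda>K. prob (H K)) \<longlonglongrightarrow> prob (\<Union>K. H K)"
    using assms(3,4) by (intro finite_Lim_measure_incseq) auto
  ultimately have "eventually (\<lambda>K. q < prob (H K)) sequentially"
    by (intro order_tendstoD(1))
  then show ?thesis using that by (auto simp: eventually_sequentially)
qed

lemma second_moment_count_le:
  assumes F: "finite F" and ev: "\<And>i. i \<in> F \<Longrightarrow> A i \<in> events"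
    and pw: "\<And>i j. i \<in> F \<Longrightarrow> j \<in> F \<Longrightarrow> i \<noteq> j \<Longrightarrow> prob (A i \<inter> A j) \<le> prob (A i) * prob (A j)"
  shows "(\<integral>\<omega>. (\<Sum>i\<in>F. indicator (A i) \<omega> :: real)\<^sup>2 \<partial>M)
           \<le> (\<Sum>i\<in>F. prob (A i)) + (\<Sum>i\<in>F. prob (A i))\<^sup>2"
proof -
  have ev2: "A i \<inter> A j \<in> events" if "i \<in> F" "j \<in> F" for i j using ev that by auto
  have "(\<integral>\<omega>. (\<Sum>i\<in>F. indicator (A i) \<omega> :: real)\<^sup>2 \<partial>M)
      = (\<integral>\<omega>. (\<Sum>i\<in>F. \<Sum>j\<in>F. indicator (A i \<inter> A j) \<omega> :: real) \<partial>M)"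
    by (simp add: power2_eq_square sum_product indicator_inter_arith)
  also have "\<dots> = (\<Sum>i\<in>F. \<Sum>j\<in>F. prob (A i \<inter> A j))"
    using ev2 by (simp add: Bochner_Integration.integral_sum Bochner_Integration.integrable_sum
        integrable_real_indicator less_top[symmetric] sets.Int_space_eq2)
  also have "\<dots> \<le> (\<Sum>i\<in>F. prob (A i) + (\<Sum>j\<in>F. prob (A i) * prob (A j)))"
  proof (rule sum_mono)
    fix i assume i: "i \<in> F"
    have "(\<Sum>j\<in>F. prob (A i \<inter> A j)) = prob (A i) + (\<Sum>j\<in>F-{i}. prob (A i \<inter> A j))"
      using F i by (simp add: sum.remove)
    also have "\<dots> \<le> prob (A i) + (\<Sum>j\<in>F-{i}. prob (A i) * prob (A j))"
      using pw i by (intro add_mono sum_mono) auto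
    also have "\<dots> \<le> prob (A i) + (\<Sum>j\<in>F. prob (A i) * prob (A j))"
      using F i by (intro add_left_mono sum_mono2) auto
    finally show "(\<Sum>j\<in>F. prob (A i \<inter> A j)) \<le> prob (A i) + (\<Sum>j\<in>F. prob (A i) * prob (A j))" .
  qed
  also have "\<dots> = (\<Sum>i\<in>F. prob (A i)) + (\<Sum>i\<in>F. prob (A i))\<^sup>2"
    by (simp add: sum.distrib sum_product power2_eq_square)
  finally show ?thesis .
qed

text \<open>With \<open>Z\<close> the number of events that occur, \<open>U\<close> their union and \<open>t = 1 + E Z\<close>,
  integrate the pointwise inequality \<open>2 Z \<le> Z\<^sup>2 / t + t \<cdot> 1\<^sub>U\<close>.\<close>
lemma chung_erdos_inequality:
  assumes F: "finite F" and ev: "\<And>i. i \<in> F \<Longrightarrow> A i \<in> events"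
    and pw: "\<And>i j. i \<in> F \<Longrightarrow> j \<in> F \<Longrightarrow> i \<noteq> j \<Longrightarrow> prob (A i \<inter> A j) \<le> prob (A i) * prob (A j)"
  shows "(\<Sum>i\<in>F. prob (A i)) / (1 + (\<Sum>i\<in>F. prob (A i))) \<le> prob (\<Union>i\<in>F. A i)"
proof -
  define s where "s = (\<Sum>i\<in>F. prob (A i))"
  define t where "t = 1 + s"
  define U where "U = (\<Union>i\<in>F. A i)"
  define Z where "Z \<omega> = (\<Sum>i\<in>F. indicator (A i) \<omega> :: real)" for \<omega>
  have s: "0 \<le> s" unfolding s_def by (simp add: sum_nonneg)
  then have t: "0 < t" unfolding t_def by simp
  have U: "U \<in> events" unfolding U_def using ev F by auto
  have pointwise: "2 * Z \<omega> \<le> (Z \<omega>)\<^sup>2 / t + t * indicator U \<omega>" for \<omega>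
  proof (cases "\<omega> \<in> U")
    case True
    have "0 \<le> (Z \<omega> - t)\<^sup>2" by simp
    then show ?thesis using True t by (simp add: field_simps power2_eq_square)
  next
    case False
    then show ?thesis unfolding Z_def U_def by (simp add: sum.neutral)
  qed
  have int_ind: "integrable M (indicator (A i) :: 'a \<Rightarrow> real)" if "i \<in> F" for i
    using ev[OF that] by (simp add: integrable_real_indicator less_top[symmetric])
  have int_Z: "integrable M Z" unfolding Z_def using int_ind by simp
  have "(\<lambda>\<omega>. (Z \<omega>)\<^sup>2) = (\<lambda>\<omega>. \<Sum>i\<in>F. \<Sum>j\<in>F. indicator (A i \<inter> A j) \<omega> :: real)"
    unfolding Z_def by (simp add: power2_eq_square sum_product indicator_inter_arith)
  then have int_Z2: "integrable M (\<lambda>\<omega>. (Z \<omega>)\<^sup>2)"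
    using ev by (auto intro!: Bochner_Integration.integrable_sum integrable_real_indicator
        simp: less_top[symmetric])
  have int_U: "integrable M (indicator U :: 'a \<Rightarrow> real)"
    using U by (simp add: integrable_real_indicator less_top[symmetric])
  have "2 * s = (\<integral>\<omega>. 2 * Z \<omega> \<partial>M)"
    unfolding s_def Z_def using ev
      by (simp add: Bochner_Integration.integral_sum int_ind sets.Int_space_eq2)
  also have "\<dots> \<le> (\<integral>\<omega>. (Z \<omega>)\<^sup>2 / t + t * indicator U \<omega> \<partial>M)"
    using pointwise int_Z int_Z2 int_U by (intro integral_mono) auto
  also have "\<dots> = (\<integral>\<omega>. (Z \<omega>)\<^sup>2 \<partial>M) / t + t * prob U"
    using int_Z2 int_U U by simp
  also have "\<dots> \<le> (s + s\<^sup>2) / t + t * prob U"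
    unfolding Z_def s_def using second_moment_count_le[OF F ev pw] t
      by (simp add: divide_right_mono)
  also have "(s + s\<^sup>2) / t = s" unfolding t_def using s by (simp add: field_simps power2_eq_square)
  finally have "s \<le> t * prob U" by simp
  then show ?thesis using t unfolding s_def[symmetric] U_def[symmetric] t_def
    by (simp add: divide_le_eq mult.commute)
qed

lemma prob_UN_eq_1_if_sum_unbounded:
  assumes ev: "\<And>i. i \<in> R \<Longrightarrow> A i \<in> events" and UN: "(\<Union>i\<in>R. A i) \<in> events"
    and pw: "\<And>i j. i \<in> R \<Longrightarrow> j \<in> R \<Longrightarrow> i \<noteq> j \<Longrightarrow> prob (A i \<inter> A j) \<le> prob (A i) * prob (A j)"
    and unbounded: "\<And>B. \<exists>F. finite F \<and> F \<subseteq> R \<and> B < (\<Sum>i\<in>F. prob (A i))"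
  shows "prob (\<Union>i\<in>R. A i) = 1"
proof (rule ccontr)
  define p where "p = prob (\<Union>i\<in>R. A i)"
  assume "prob (\<Union>i\<in>R. A i) \<noteq> 1"
  then have p: "p < 1" unfolding p_def using prob_le_1
    by (simp add: order.not_eq_order_implies_strict)
  obtain F where F: "finite F" "F \<subseteq> R" "p / (1 - p) < (\<Sum>i\<in>F. prob (A i))"
    using unbounded by blast
  define s where "s = (\<Sum>i\<in>F. prob (A i))"
  have "s / (1 + s) \<le> prob (\<Union>i\<in>F. A i)"
    unfolding s_def
  proof (rule chung_erdos_inequality)
    show "A i \<in> events" if "i \<in> F" for i using F(2) that ev by blast
    show "prob (A i \<inter> A j) \<le> prob (A i) * prob (A j)" if "i \<in> F" "j \<in> F" "i \<noteq> j" for i j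
      using F(2) that pw by blast
  qed (rule F(1))
  also have "\<dots> \<le> p" unfolding p_def using F UN by (intro finite_measure_mono) auto
  finally have "s \<le> p * (1 + s)" by (simp add: s_def sum_nonneg divide_le_eq add_pos_nonneg)
  moreover have "p < s * (1 - p)" using F(3) p unfolding s_def by (simp add: field_simps)
  ultimately show False by (simp add: algebra_simps)
qed

end

section \<open>Negatively associated random variables\<close>

locale neg_assoc_rvs = prob_space M for M :: "'a measure" +
  fixes I :: "'i set" and X :: "'i \<Rightarrow> 'a \<Rightarrow> real"
  assumes measurable_X: "\<And>i. i \<in> I \<Longrightarrow> X i \<in> borel_measurable M"
    and neg_assoc_X: "neg_assoc M I X"
begin

lemma covariance_mono_nonpos:
  fixes \<phi> \<psi> :: "real \<Rightarrow> real"
  assumes ij: "i \<in> I" "j \<in> I" "i \<noteq> j" and mono: "mono \<phi>" "mono \<psi>"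
    and meas: "\<phi> \<in> borel_measurable borel" "\<psi> \<in> borel_measurable borel"
    and bounded: "\<And>x. \<bar>\<phi> x\<bar> \<le> C" "\<And>x. \<bar>\<psi> x\<bar> \<le> C"
  shows "(\<integral>\<omega>. \<phi> (X i \<omega>) * \<psi> (X j \<omega>) \<partial>M) \<le> (\<integral>\<omega>. \<phi> (X i \<omega>) \<partial>M) * (\<integral>\<omega>. \<psi> (X j \<omega>) \<partial>M)"
proof -
  define f where "f x = \<phi> (x i)" for x :: "'i \<Rightarrow> real"
  define g where "g x = \<psi> (x j)" for x :: "'i \<Rightarrow> real"
  have meas_fg: "f \<in> borel_measurable (PiM {i} (\<lambda>_. borel))"
      "g \<in> borel_measurable (PiM {j} (\<lambda>_. borel))"
    unfolding f_def g_def using meas by measurable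
  have mono_fg: "coord_mono {i} f" "coord_mono {j} g"
    unfolding coord_mono_def f_def g_def using mono by (auto dest: monoD)
  have fg: "f (restrict (\<lambda>l. X l \<omega>) {i}) = \<phi> (X i \<omega>)" "g (restrict (\<lambda>l. X l \<omega>) {j}) = \<psi> (X j \<omega>)"
    for \<omega> unfolding f_def g_def by simp_all
  have m: "(\<lambda>\<omega>. \<phi> (X i \<omega>)) \<in> borel_measurable M" "(\<lambda>\<omega>. \<psi> (X j \<omega>)) \<in> borel_measurable M"
    using measurable_X[OF ij(1)] measurable_X[OF ij(2)] meas by measurable
  have int: "integrable M (\<lambda>\<omega>. \<phi> (X i \<omega>))" "integrable M (\<lambda>\<omega>. \<psi> (X j \<omega>))"
    using m bounded by (auto intro: integrable_bounded_real)
  have int_prod: "integrable M (\<lambda>\<omega>. \<phi> (X i \<omega>) * \<psi> (X j \<omega>))"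
  proof (rule integrable_bounded_real[where C = "C * C"])
    show "(\<lambda>\<omega>. \<phi> (X i \<omega>) * \<psi> (X j \<omega>)) \<in> borel_measurable M" using m by measurable
    show "\<bar>\<phi> (X i \<omega>) * \<psi> (X j \<omega>)\<bar> \<le> C * C" for \<omega>
      unfolding abs_mult using bounded
        by (intro mult_mono) (auto intro: order_trans[OF abs_ge_zero])
  qed
  have "(\<integral>\<omega>. f (restrict (\<lambda>l. X l \<omega>) {i}) * g (restrict (\<lambda>l. X l \<omega>) {j}) \<partial>M)
      - (\<integral>\<omega>. f (restrict (\<lambda>l. X l \<omega>) {i}) \<partial>M) * (\<integral>\<omega>. g (restrict (\<lambda>l. X l \<omega>) {j}) \<partial>M) \<le> 0"
    by (rule neg_assoc_X[unfolded neg_assoc_def, rule_format], unfold fg)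
      (use ij meas_fg mono_fg int int_prod in simp)
  then show ?thesis unfolding fg by simp
qed

lemma prob_gt_inter_le:
  assumes "i \<in> I" "j \<in> I" "i \<noteq> j"
  shows "prob ({\<omega>\<in>space M. s < X i \<omega>} \<inter> {\<omega>\<in>space M. t < X j \<omega>})
    \<le> prob {\<omega>\<in>space M. s < X i \<omega>} * prob {\<omega>\<in>space M. t < X j \<omega>}"
proof -
  have "mono (indicator {u<..} :: real \<Rightarrow> real)" for u
    unfolding mono_def indicator_def by auto
  then have "(\<integral>\<omega>. indicat_real {s<..} (X i \<omega>) * indicator {t<..} (X j \<omega>) \<partial>M)
     \<le> (\<integral>\<omega>. indicat_real {s<..} (X i \<omega>) \<partial>M) * (\<integral>\<omega>. indicator {t<..} (X j \<omega>) \<partial>M)"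
    using assms by (intro covariance_mono_nonpos[where C=1]) auto
  also have "(\<integral>\<omega>. indicat_real {s<..} (X i \<omega>) * indicator {t<..} (X j \<omega>) \<partial>M)
      = (\<integral>\<omega>. indicator ({\<omega>\<in>space M. s < X i \<omega>} \<inter> {\<omega>\<in>space M. t < X j \<omega>}) \<omega> \<partial>M)"
    by (intro Bochner_Integration.integral_cong) (auto simp: indicator_def)
  finally show ?thesis by (simp add: integral_indicator_comp Int_absorb2 subset_iff)
qed

lemma prob_lt_inter_le:
  assumes "i \<in> I" "j \<in> I" "i \<noteq> j"
  shows "prob ({\<omega>\<in>space M. X i \<omega> < s} \<inter> {\<omega>\<in>space M. X j \<omega> < t})
    \<le> prob {\<omega>\<in>space M. X i \<omega> < s} * prob {\<omega>\<in>space M. X j \<omega> < t}"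
proof -
  have "mono (\<lambda>x. - indicator {..<u} x :: real)" for u :: real
    unfolding mono_def indicator_def by auto
  then have "(\<integral>\<omega>. - indicat_real {..<s} (X i \<omega>) * - indicator {..<t} (X j \<omega>) \<partial>M)
     \<le> (\<integral>\<omega>. - indicat_real {..<s} (X i \<omega>) \<partial>M) * (\<integral>\<omega>. - indicator {..<t} (X j \<omega>) \<partial>M)"
    using assms by (intro covariance_mono_nonpos[where C=1]) auto
  also have "(\<integral>\<omega>. - indicat_real {..<s} (X i \<omega>) * - indicator {..<t} (X j \<omega>) \<partial>M)
      = (\<integral>\<omega>. indicator ({\<omega>\<in>space M. X i \<omega> < s} \<inter> {\<omega>\<in>space M. X j \<omega> < t}) \<omega> \<partial>M)"
    by (intro Bochner_Integration.integral_cong) (auto simp: indicator_def)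
  finally show ?thesis by (simp add: integral_indicator_comp Int_absorb2 subset_iff)
qed

lemma integral_centered_mult_nonpos:
  fixes \<phi> :: "real \<Rightarrow> real"
  assumes ij: "i \<in> I" "j \<in> I" "i \<noteq> j" and mono: "mono \<phi>"
    and meas: "\<phi> \<in> borel_measurable borel" and bounded: "\<And>x. \<bar>\<phi> x\<bar> \<le> C"
  shows "(\<integral>\<omega>. (\<phi> (X i \<omega>) - (\<integral>\<omega>'. \<phi> (X i \<omega>') \<partial>M)) * (\<phi> (X j \<omega>) - (\<integral>\<omega>'. \<phi> (X j \<omega>') \<partial>M)) \<partial>M) \<le> 0"
proof -
  define f where "f \<omega> = \<phi> (X i \<omega>)" for \<omega>
  define g where "g \<omega> = \<phi> (X j \<omega>)" for \<omega>
  have m: "f \<in> borel_measurable M" "g \<in> borel_measurable M"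
    unfolding f_def g_def using measurable_X[OF ij(1)] measurable_X[OF ij(2)] meas by measurable
  have int: "integrable M f" "integrable M g"
    using integrable_bounded_real[OF m(1), of C] integrable_bounded_real[OF m(2), of C] bounded
    by (auto simp: f_def g_def)
  have int_fg: "integrable M (\<lambda>\<omega>. f \<omega> * g \<omega>)"
  proof (rule integrable_bounded_real[where C = "C * C"])
    show "(\<lambda>\<omega>. f \<omega> * g \<omega>) \<in> borel_measurable M" using m by measurable
    show "\<bar>f \<omega> * g \<omega>\<bar> \<le> C * C" for \<omega>
      unfolding abs_mult f_def g_def using bounded
        by (intro mult_mono) (auto intro: order_trans[OF abs_ge_zero])
  qed
  have "(\<integral>\<omega>. (f \<omega> - integral\<^sup>L M f) * (g \<omega> - integral\<^sup>L M g) \<partial>M)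
      = (\<integral>\<omega>. f \<omega> * g \<omega> - integral\<^sup>L M g * f \<omega> - integral\<^sup>L M f * g \<omega>
            + integral\<^sup>L M f * integral\<^sup>L M g \<partial>M)"
    by (simp add: algebra_simps)
  also have "\<dots> = (\<integral>\<omega>. f \<omega> * g \<omega> \<partial>M) - integral\<^sup>L M f * integral\<^sup>L M g"
    using int int_fg by (simp add: prob_space)
  also have "\<dots> \<le> 0"
    using covariance_mono_nonpos[OF ij mono mono meas meas bounded bounded]
      unfolding f_def g_def by simp
  finally show ?thesis unfolding f_def g_def .
qed

lemma integral_sq_sum_centered_le:
  fixes \<phi> :: "real \<Rightarrow> real"
  assumes B: "finite B" "B \<subseteq> I" and mono: "mono \<phi>"
    and meas: "\<phi> \<in> borel_measurable borel" and bounded: "\<And>x. \<bar>\<phi> x\<bar> \<le> C"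
  shows "(\<integral>\<omega>. (\<Sum>n\<in>B. \<phi> (X n \<omega>) - (\<integral>\<omega>'. \<phi> (X n \<omega>') \<partial>M))\<^sup>2 \<partial>M) \<le> real (card B) * (2 * C)\<^sup>2"
proof -
  define a where "a n \<omega> = \<phi> (X n \<omega>) - (\<integral>\<omega>'. \<phi> (X n \<omega>') \<partial>M)" for n \<omega>
  have meas_a: "a n \<in> borel_measurable M" if "n \<in> I" for n
    unfolding a_def using measurable_X[OF that] meas by measurable
  have a_bound: "\<bar>a n \<omega>\<bar> \<le> 2 * C" for n \<omega>
    unfolding a_def using bounded[of "X n \<omega>"] abs_integral_le[of "\<lambda>\<omega>. \<phi> (X n \<omega>)", OF bounded]
    by linarith
  have int_aa: "integrable M (\<lambda>\<omega>. a n \<omega> * a l \<omega>)" if "n \<in> I" "l \<in> I" for n l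
  proof (rule integrable_bounded_real[where C = "2 * C * (2 * C)"])
    show "(\<lambda>\<omega>. a n \<omega> * a l \<omega>) \<in> borel_measurable M" using meas_a that by measurable
    show "\<bar>a n \<omega> * a l \<omega>\<bar> \<le> 2 * C * (2 * C)" for \<omega>
      unfolding abs_mult using a_bound abs_ge_zero[of "\<phi> 0"] bounded[of 0] by (intro mult_mono) auto
  qed
  have "(\<integral>\<omega>. (\<Sum>n\<in>B. a n \<omega>)\<^sup>2 \<partial>M) = (\<Sum>n\<in>B. \<Sum>l\<in>B. (\<integral>\<omega>. a n \<omega> * a l \<omega> \<partial>M))"
    using B int_aa
    by (simp add: power2_eq_square sum_product Bochner_Integration.integral_sum
        Bochner_Integration.integrable_sum subset_iff)
  also have "\<dots> \<le> (\<Sum>n\<in>B. (2 * C)\<^sup>2)"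
  proof (rule sum_mono)
    fix n assume n: "n \<in> B"
    have "(\<Sum>l\<in>B. (\<integral>\<omega>. a n \<omega> * a l \<omega> \<partial>M))
        = (\<integral>\<omega>. a n \<omega> * a n \<omega> \<partial>M) + (\<Sum>l\<in>B-{n}. (\<integral>\<omega>. a n \<omega> * a l \<omega> \<partial>M))"
      using B n by (simp add: sum.remove)
    also have "\<dots> \<le> (\<integral>\<omega>. (2 * C)\<^sup>2 \<partial>M) + 0"
    proof (rule add_mono)
      have "a n \<omega> * a n \<omega> \<le> (2 * C)\<^sup>2" for \<omega>
      proof -
        have "\<bar>a n \<omega>\<bar> * \<bar>a n \<omega>\<bar> \<le> (2 * C) * (2 * C)"
          by (rule mult_mono) (use a_bound[of n \<omega>] in auto)
        then show ?thesis by (simp add: power2_eq_square)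
      qed
      then show "(\<integral>\<omega>. a n \<omega> * a n \<omega> \<partial>M) \<le> (\<integral>\<omega>. (2 * C)\<^sup>2 \<partial>M)"
        using int_aa n B by (intro integral_mono) auto
      show "(\<Sum>l\<in>B-{n}. (\<integral>\<omega>. a n \<omega> * a l \<omega> \<partial>M)) \<le> 0"
        using n B unfolding a_def
        by (intro sum_nonpos integral_centered_mult_nonpos[OF _ _ _ mono meas bounded]) auto
    qed
    finally show "(\<Sum>l\<in>B. (\<integral>\<omega>. a n \<omega> * a l \<omega> \<partial>M)) \<le> (2 * C)\<^sup>2" by (simp add: prob_space)
  qed
  finally show ?thesis unfolding a_def by simp
qed

lemma prob_abs_sum_centered_ge_le:
  fixes \<phi> :: "real \<Rightarrow> real"
  assumes B: "finite B" "B \<subseteq> I" and mono: "mono \<phi>"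
    and meas: "\<phi> \<in> borel_measurable borel" and bounded: "\<And>x. \<bar>\<phi> x\<bar> \<le> C" and a: "0 < a"
  shows "prob {\<omega>\<in>space M. a \<le> \<bar>\<Sum>n\<in>B. \<phi> (X n \<omega>) - (\<integral>\<omega>'. \<phi> (X n \<omega>') \<partial>M)\<bar>}
    \<le> real (card B) * (2 * C)\<^sup>2 / a\<^sup>2"
proof -
  define W where "W \<omega> = (\<Sum>n\<in>B. \<phi> (X n \<omega>) - (\<integral>\<omega>'. \<phi> (X n \<omega>') \<partial>M))" for \<omega>
  have meas_W: "W \<in> borel_measurable M"
    unfolding W_def using B measurable_X meas
      by (intro borel_measurable_sum) (auto simp: subset_iff)
  have W_bound: "\<bar>W \<omega>\<bar> \<le> real (card B) * (2 * C)" for \<omega>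
  proof -
    have "\<bar>\<phi> (X n \<omega>) - (\<integral>\<omega>'. \<phi> (X n \<omega>') \<partial>M)\<bar> \<le> 2 * C" for n
      using bounded[of "X n \<omega>"] abs_integral_le[of "\<lambda>\<omega>'. \<phi> (X n \<omega>')", OF bounded] by linarith
    then have "(\<Sum>n\<in>B. \<bar>\<phi> (X n \<omega>) - (\<integral>\<omega>'. \<phi> (X n \<omega>') \<partial>M)\<bar>) \<le> real (card B) * (2 * C)"
      using sum_bounded_above[of B _ "2 * C"] by simp
    then show ?thesis unfolding W_def by (rule order_trans[OF sum_abs])
  qed
  have "integrable M (\<lambda>\<omega>. (W \<omega>)\<^sup>2)"
  proof (rule integrable_bounded_real[where C = "(real (card B) * (2 * C))\<^sup>2"])
    show "(\<lambda>\<omega>. (W \<omega>)\<^sup>2) \<in> borel_measurable M" using meas_W by measurable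
    show "\<bar>(W \<omega>)\<^sup>2\<bar> \<le> (real (card B) * (2 * C))\<^sup>2" for \<omega>
      using power_mono[OF W_bound abs_ge_zero, of \<omega> 2] by simp
  qed
  then have "prob {\<omega>\<in>space M. a \<le> \<bar>W \<omega>\<bar>} \<le> (\<integral>\<omega>. (W \<omega>)\<^sup>2 \<partial>M) / a\<^sup>2"
    using meas_W a by (intro second_moment_method) auto
  also have "\<dots> \<le> real (card B) * (2 * C)\<^sup>2 / a\<^sup>2"
    unfolding W_def using integral_sq_sum_centered_le[OF B mono meas bounded]
      by (simp add: divide_right_mono)
  finally show ?thesis unfolding W_def .
qed

lemma prob_UN_gt_eq_1:
  assumes R: "countable R" "R \<subseteq> I"
    and unbounded: "\<And>B. \<exists>F. finite F \<and> F \<subseteq> R \<and> B < (\<Sum>n\<in>F. prob {\<omega>\<in>space M. t n < X n \<omega>})"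
  shows "prob (\<Union>n\<in>R. {\<omega>\<in>space M. t n < X n \<omega>}) = 1"
proof (rule prob_UN_eq_1_if_sum_unbounded)
  show "{\<omega>\<in>space M. t n < X n \<omega>} \<in> events" if "n \<in> R" for n
    using measurable_X[of n] that R(2) by auto
  then show "(\<Union>n\<in>R. {\<omega>\<in>space M. t n < X n \<omega>}) \<in> events"
    using R(1) by (intro sets.countable_UN'') auto
  show "prob ({\<omega>\<in>space M. t i < X i \<omega>} \<inter> {\<omega>\<in>space M. t j < X j \<omega>})
    \<le> prob {\<omega>\<in>space M. t i < X i \<omega>} * prob {\<omega>\<in>space M. t j < X j \<omega>}"
    if "i \<in> R" "j \<in> R" "i \<noteq> j" for i j
    using that R(2) by (intro prob_gt_inter_le) auto
qed (rule unbounded)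

lemma prob_UN_lt_eq_1:
  assumes R: "countable R" "R \<subseteq> I"
    and unbounded: "\<And>B. \<exists>F. finite F \<and> F \<subseteq> R \<and> B < (\<Sum>n\<in>F. prob {\<omega>\<in>space M. X n \<omega> < t n})"
  shows "prob (\<Union>n\<in>R. {\<omega>\<in>space M. X n \<omega> < t n}) = 1"
proof (rule prob_UN_eq_1_if_sum_unbounded)
  show "{\<omega>\<in>space M. X n \<omega> < t n} \<in> events" if "n \<in> R" for n
    using measurable_X[of n] that R(2) by auto
  then show "(\<Union>n\<in>R. {\<omega>\<in>space M. X n \<omega> < t n}) \<in> events"
    using R(1) by (intro sets.countable_UN'') auto
  show "prob ({\<omega>\<in>space M. X i \<omega> < t i} \<inter> {\<omega>\<in>space M. X j \<omega> < t j})
    \<le> prob {\<omega>\<in>space M. X i \<omega> < t i} * prob {\<omega>\<in>space M. X j \<omega> < t j}"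
    if "i \<in> R" "j \<in> R" "i \<noteq> j" for i j
    using that R(2) by (intro prob_lt_inter_le) auto
qed (rule unbounded)

lemma prob_UN_abs_gt_eq_1:
  assumes R: "countable R" "R \<subseteq> I" and t: "\<And>n. n \<in> R \<Longrightarrow> 0 \<le> t n"
    and unbounded: "\<And>B. \<exists>F. finite F \<and> F \<subseteq> R \<and> B < (\<Sum>n\<in>F. prob {\<omega>\<in>space M. t n < \<bar>X n \<omega>\<bar>})"
  shows "prob (\<Union>n\<in>R. {\<omega>\<in>space M. t n < \<bar>X n \<omega>\<bar>}) = 1"
proof -
  define A where "A n = {\<omega>\<in>space M. t n < \<bar>X n \<omega>\<bar>}" for n
  define Ap where "Ap n = {\<omega>\<in>space M. t n < X n \<omega>}" for n
  define Am where "Am n = {\<omega>\<in>space M. X n \<omega> < - t n}" for n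
  have split: "prob (A n) = prob (Ap n) + prob (Am n)" if "n \<in> R" for n
  proof -
    have "A n = Ap n \<union> Am n" "Ap n \<inter> Am n = {}"
      unfolding A_def Ap_def Am_def using t[OF that] by auto
    moreover have "Ap n \<in> events" "Am n \<in> events"
      unfolding Ap_def Am_def using measurable_X[of n] that R(2) by auto
    ultimately show ?thesis by (simp add: measure_Union)
  qed
  have "\<exists>F. finite F \<and> F \<subseteq> R \<and> B < (\<Sum>n\<in>F. prob (Ap n) + prob (Am n))" for B
  proof -
    obtain F where F: "finite F" "F \<subseteq> R" "B < (\<Sum>n\<in>F. prob (A n))"
      using unbounded[of B] unfolding A_def by blast
    moreover have "(\<Sum>n\<in>F. prob (A n)) = (\<Sum>n\<in>F. prob (Ap n) + prob (Am n))"
      using F(2) split by (intro sum.cong) auto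
    ultimately show ?thesis by auto
  qed
  then have "(\<forall>B. \<exists>F. finite F \<and> F \<subseteq> R \<and> B < (\<Sum>n\<in>F. prob (Ap n)))
      \<or> (\<forall>B. \<exists>F. finite F \<and> F \<subseteq> R \<and> B < (\<Sum>n\<in>F. prob (Am n)))"
    by (rule sums_unbounded_disj)
  then obtain U where U: "U = Ap \<or> U = Am" and "prob (\<Union>n\<in>R. U n) = 1"
  proof (elim disjE)
    assume "\<forall>B. \<exists>F. finite F \<and> F \<subseteq> R \<and> B < (\<Sum>n\<in>F. prob (Ap n))"
    then have "prob (\<Union>n\<in>R. Ap n) = 1" unfolding Ap_def by (intro prob_UN_gt_eq_1[OF R]) blast
    then show thesis using that by blast
  next
    assume "\<forall>B. \<exists>F. finite F \<and> F \<subseteq> R \<and> B < (\<Sum>n\<in>F. prob (Am n))"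
    then have "prob (\<Union>n\<in>R. Am n) = 1" unfolding Am_def by (intro prob_UN_lt_eq_1[OF R]) blast
    then show thesis using that by blast
  qed
  moreover have "(\<Union>n\<in>R. A n) \<in> events"
    unfolding A_def using measurable_X R by (intro sets.countable_UN'') auto
  moreover have "(\<Union>n\<in>R. U n) \<subseteq> (\<Union>n\<in>R. A n)"
    using U unfolding A_def Ap_def Am_def by auto
  ultimately have "1 \<le> prob (\<Union>n\<in>R. A n)" by (metis finite_measure_mono)
  then show ?thesis using prob_le_1[of "\<Union>n\<in>R. A n"] unfolding A_def by linarith
qed

end

locale neg_assoc_ident = neg_assoc_rvs +
  fixes Y :: "'a \<Rightarrow> real"
  assumes measurable_Y: "Y \<in> borel_measurable M"
    and distr_X: "\<And>i. i \<in> I \<Longrightarrow> distr M borel (X i) = distr M borel Y"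
begin

lemma integral_comp_X:
  assumes "i \<in> I" "g \<in> borel_measurable borel"
  shows "(\<integral>\<omega>. g (X i \<omega>) \<partial>M) = (\<integral>\<omega>. (g (Y \<omega>) :: real) \<partial>M)"
  using integral_distr[OF measurable_X[OF assms(1)] assms(2)]
    integral_distr[OF measurable_Y assms(2)]
    distr_X[OF assms(1)] by simp

lemma integrable_comp_X_iff:
  assumes "i \<in> I" "g \<in> borel_measurable borel"
  shows "integrable M (\<lambda>\<omega>. g (X i \<omega>) :: real) \<longleftrightarrow> integrable M (\<lambda>\<omega>. g (Y \<omega>))"
  using integrable_distr_eq[OF measurable_X[OF assms(1)] assms(2)]
    integrable_distr_eq[OF measurable_Y assms(2)] distr_X[OF assms(1)] by simp

lemma prob_X_eq:
  assumes "i \<in> I" "S \<in> sets borel"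
  shows "prob {\<omega>\<in>space M. X i \<omega> \<in> S} = prob {\<omega>\<in>space M. Y \<omega> \<in> S}"
proof -
  have "X i -` S \<inter> space M = {\<omega>\<in>space M. X i \<omega> \<in> S}" "Y -` S \<inter> space M = {\<omega>\<in>space M. Y \<omega> \<in> S}"
    by auto
  then show ?thesis
    using measure_distr[OF measurable_X[OF assms(1)] assms(2)]
      measure_distr[OF measurable_Y assms(2)]
      distr_X[OF assms(1)] by simp
qed

lemma nn_integral_card_exceed_le:
  assumes R: "R \<subseteq> I" and fin: "\<And>y. finite {n\<in>R. t n < y}"
    and sums: "\<And>F. finite F \<Longrightarrow> F \<subseteq> R \<Longrightarrow> (\<Sum>n\<in>F. prob {\<omega>\<in>space M. t n < \<bar>X n \<omega>\<bar>}) \<le> B"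
  shows "(\<integral>\<^sup>+\<omega>. ennreal (card {n\<in>R. t n < \<bar>Y \<omega>\<bar>}) \<partial>M) \<le> ennreal B"
proof -
  define F where "F K = {n\<in>R. t n < real K}" for K :: nat
  define g where "g K \<omega> = (\<Sum>n\<in>F K. indicat_real {y. t n < \<bar>y\<bar>} (Y \<omega>))" for K \<omega>
  have finF: "finite (F K)" for K unfolding F_def by (rule fin)
  have borel: "{y::real. s < \<bar>y\<bar>} \<in> sets borel" for s by measurable
  have meas_g: "g K \<in> borel_measurable M" for K
    unfolding g_def using measurable_Y borel by measurable
  have g_card: "g K \<omega> = real (card {n\<in>F K. t n < \<bar>Y \<omega>\<bar>})" for K \<omega>
    unfolding g_def using finF by (simp add: indicator_def sum.If_cases Int_def)
  have int_ind: "integrable M (\<lambda>\<omega>. indicat_real {y. s < \<bar>y\<bar>} (Y \<omega>))" for s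
  proof (rule integrable_bounded_real[where C=1])
    show "(\<lambda>\<omega>. indicat_real {y. s < \<bar>y\<bar>} (Y \<omega>)) \<in> borel_measurable M"
      using measurable_Y borel by measurable
  qed (simp add: indicator_def)
  have int_g: "integrable M (g K)" for K unfolding g_def using int_ind by simp
  have E_g: "(\<integral>\<omega>. g K \<omega> \<partial>M) \<le> B" for K
  proof -
    have "(\<integral>\<omega>. g K \<omega> \<partial>M) = (\<Sum>n\<in>F K. prob {\<omega>\<in>space M. Y \<omega> \<in> {y. t n < \<bar>y\<bar>}})"
      unfolding g_def using int_ind by (simp add: integral_indicator_comp del: mem_Collect_eq)
    also have "\<dots> = (\<Sum>n\<in>F K. prob {\<omega>\<in>space M. X n \<omega> \<in> {y. t n < \<bar>y\<bar>}})"
      using R by (intro sum.cong refl prob_X_eq[symmetric, OF _ borel]) (auto simp: F_def)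
    also have "\<dots> \<le> B" using sums finF R by (auto simp: F_def)
    finally show ?thesis .
  qed
  have SUP_g: "(SUP K. ennreal (g K \<omega>)) = ennreal (card {n\<in>R. t n < \<bar>Y \<omega>\<bar>})" for \<omega>
    unfolding g_card F_def using fin by (rule SUP_card_truncated_level_set)
  have "incseq (\<lambda>K \<omega>. ennreal (g K \<omega>))"
    unfolding g_card F_def
    by (intro incseq_SucI le_funI ennreal_leI of_nat_mono card_mono)
      (auto intro: finite_subset[OF _ fin])
  then have "(\<integral>\<^sup>+\<omega>. ennreal (card {n\<in>R. t n < \<bar>Y \<omega>\<bar>}) \<partial>M) = (SUP K. \<integral>\<^sup>+\<omega>. ennreal (g K \<omega>) \<partial>M)"
    using meas_g by (simp add: SUP_g[symmetric] nn_integral_monotone_convergence_SUP)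
  also have "\<dots> \<le> ennreal B"
  proof (rule SUP_least)
    fix K
    have "0 \<le> g K \<omega>" for \<omega> unfolding g_card by simp
    then show "(\<integral>\<^sup>+\<omega>. ennreal (g K \<omega>) \<partial>M) \<le> ennreal B"
      using int_g[of K] E_g[of K] by (simp add: nn_integral_eq_integral ennreal_leI)
  qed
  finally show ?thesis .
qed

lemma prob_sum_comp_ge_le:
  fixes g :: "real \<Rightarrow> real"
  assumes B: "finite B" "B \<subseteq> I" and meas: "g \<in> borel_measurable borel" and nonneg: "\<And>x. 0 \<le> g x"
    and int: "integrable M (\<lambda>\<omega>. g (Y \<omega>))" and a: "0 < a"
  shows "prob {\<omega>\<in>space M. a \<le> (\<Sum>n\<in>B. g (X n \<omega>))} \<le> real (card B) * (\<integral>\<omega>. g (Y \<omega>) \<partial>M) / a"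
proof -
  have int_n: "integrable M (\<lambda>\<omega>. g (X n \<omega>))" if "n \<in> B" for n
    using integrable_comp_X_iff[OF _ meas, of n] B that int by auto
  have "prob {\<omega>\<in>space M. a \<le> (\<Sum>n\<in>B. g (X n \<omega>))} \<le> (\<integral>\<omega>. (\<Sum>n\<in>B. g (X n \<omega>)) \<partial>M) / a"
    using int_n a nonneg
      by (intro integral_Markov_inequality_measure[where A = "space M"]) (auto intro: sum_nonneg)
  also have "(\<integral>\<omega>. (\<Sum>n\<in>B. g (X n \<omega>)) \<partial>M) = real (card B) * (\<integral>\<omega>. g (Y \<omega>) \<partial>M)"
    using int_n B by (simp add: Bochner_Integration.integral_sum
        integral_comp_X[OF _ meas] subset_iff)
  finally show ?thesis .
qed

text \<open>Truncate at level \<open>t\<close>: the truncated sum is controlled by the variance bound of negative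
  association, the remainder by Markov's inequality.\<close>
lemma prob_sum_deviation_le:
  fixes \<epsilon> t :: real
  defines "R \<equiv> (\<integral>\<omega>. \<bar>Y \<omega> - clip t (Y \<omega>)\<bar> \<partial>M)"
  assumes int: "integrable M Y" and B: "finite B" "B \<subseteq> I" "B \<noteq> {}"
    and \<epsilon>: "0 < \<epsilon>" and t: "0 \<le> t" and R: "R \<le> \<epsilon> / 6"
  shows "prob {\<omega>\<in>space M. \<epsilon> * real (card B) \<le> \<bar>(\<Sum>n\<in>B. X n \<omega>) - real (card B) * (\<integral>\<omega>. Y \<omega> \<partial>M)\<bar>}
    \<le> 36 * t\<^sup>2 / (\<epsilon>\<^sup>2 * real (card B)) + 3 * R / \<epsilon>"
proof -
  define K where "K = real (card B)"
  have K: "0 < K" unfolding K_def using B by (simp add: card_gt_0_iff)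
  define m where "m = (\<integral>\<omega>. clip t (Y \<omega>) \<partial>M)"
  have int_clip: "integrable M (\<lambda>\<omega>. clip t (Y \<omega>))"
    using measurable_Y abs_clip_le[OF t] by (intro integrable_bounded_real[where C = t]) auto
  have "\<bar>m - (\<integral>\<omega>. Y \<omega> \<partial>M)\<bar> = \<bar>\<integral>\<omega>. Y \<omega> - clip t (Y \<omega>) \<partial>M\<bar>"
    unfolding m_def using int int_clip by simp
  also have "\<dots> \<le> R" unfolding R_def using integral_norm_bound[of M "\<lambda>\<omega>. Y \<omega> - clip t (Y \<omega>)"] by simp
  finally have mean: "K * \<bar>m - (\<integral>\<omega>. Y \<omega> \<partial>M)\<bar> \<le> K * (\<epsilon> / 6)"
    using R K by (intro mult_left_mono) auto
  define W where "W \<omega> = \<bar>\<Sum>n\<in>B. clip t (X n \<omega>) - (\<integral>\<omega>'. clip t (X n \<omega>') \<partial>M)\<bar>" for \<omega>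
  define Z where "Z \<omega> = (\<Sum>n\<in>B. \<bar>X n \<omega> - clip t (X n \<omega>)\<bar>)" for \<omega>
  have W_eq: "W \<omega> = \<bar>\<Sum>n\<in>B. clip t (X n \<omega>) - m\<bar>" for \<omega>
    unfolding W_def m_def using B by (intro arg_cong[where f = abs] sum.cong refl)
      (auto simp: integral_comp_X[OF _ borel_measurable_clip])
  have meas_WZ: "W \<in> borel_measurable M" "Z \<in> borel_measurable M"
    unfolding W_def Z_def using B measurable_X by (auto simp: subset_iff)
  have "{\<omega>\<in>space M. \<epsilon> * K \<le> \<bar>(\<Sum>n\<in>B. X n \<omega>) - K * (\<integral>\<omega>. Y \<omega> \<partial>M)\<bar>}
      \<subseteq> {\<omega>\<in>space M. \<epsilon> * K / 3 \<le> W \<omega>} \<union> {\<omega>\<in>space M. \<epsilon> * K / 3 \<le> Z \<omega>}"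
  proof safe
    fix \<omega> assume "\<omega> \<in> space M" "\<epsilon> * K \<le> \<bar>(\<Sum>n\<in>B. X n \<omega>) - K * (\<integral>\<omega>. Y \<omega> \<partial>M)\<bar>"
      "\<not> \<epsilon> * K / 3 \<le> Z \<omega>"
    moreover have "0 < \<epsilon> * K" using \<epsilon> K by simp
    ultimately show "\<epsilon> * K / 3 \<le> W \<omega>"
      using mean abs_sum_sub_le_clip[OF B(1), of "\<lambda>n. X n \<omega>" "\<integral>\<omega>. Y \<omega> \<partial>M" t m]
      unfolding W_eq Z_def K_def by (simp add: algebra_simps)
  qed
  then have "prob {\<omega>\<in>space M. \<epsilon> * K \<le> \<bar>(\<Sum>n\<in>B. X n \<omega>) - K * (\<integral>\<omega>. Y \<omega> \<partial>M)\<bar>}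
      \<le> prob {\<omega>\<in>space M. \<epsilon> * K / 3 \<le> W \<omega>} + prob {\<omega>\<in>space M. \<epsilon> * K / 3 \<le> Z \<omega>}"
    using meas_WZ by (intro order_trans[OF finite_measure_mono measure_subadditive]) auto
  also have "prob {\<omega>\<in>space M. \<epsilon> * K / 3 \<le> W \<omega>} \<le> K * (2 * t)\<^sup>2 / (\<epsilon> * K / 3)\<^sup>2"
    unfolding W_def K_def using B \<epsilon> K[unfolded K_def]
    by (intro prob_abs_sum_centered_ge_le mono_clip borel_measurable_clip abs_clip_le t) auto
  also have "prob {\<omega>\<in>space M. \<epsilon> * K / 3 \<le> Z \<omega>} \<le> K * R / (\<epsilon> * K / 3)"
    unfolding Z_def K_def R_def using B \<epsilon> K[unfolded K_def] int int_clip
    by (intro prob_sum_comp_ge_le) auto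
  finally show ?thesis using K \<epsilon> unfolding K_def by (simp add: field_simps power2_eq_square)
qed

lemma weak_law:
  fixes \<epsilon> \<delta> :: real
  assumes int: "integrable M Y" and \<epsilon>: "0 < \<epsilon>" and \<delta>: "0 < \<delta>"
  obtains K0 where "\<And>B. finite B \<Longrightarrow> B \<subseteq> I \<Longrightarrow> K0 \<le> card B \<Longrightarrow>
    prob {\<omega>\<in>space M. \<epsilon> * real (card B) \<le> \<bar>(\<Sum>n\<in>B. X n \<omega>) - real (card B) * (\<integral>\<omega>. Y \<omega> \<partial>M)\<bar>} \<le> \<delta>"
proof -
  define R where "R t = (\<integral>\<omega>. \<bar>Y \<omega> - clip t (Y \<omega>)\<bar> \<partial>M)" for t
  have "0 < \<epsilon> * min 1 \<delta> / 6" using \<epsilon> \<delta> by simp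
  then have "eventually (\<lambda>t. R (real t) < \<epsilon> * min 1 \<delta> / 6) sequentially"
    using order_tendstoD(2)[OF integral_abs_sub_clip_tendsto_0[OF int]] unfolding R_def by blast
  then obtain t0 :: nat where "R (real t0) < \<epsilon> * min 1 \<delta> / 6"
    by (auto simp: eventually_sequentially)
  moreover have "\<epsilon> * min 1 \<delta> \<le> \<epsilon> * 1" "\<epsilon> * min 1 \<delta> \<le> \<epsilon> * \<delta>"
    using \<epsilon> by (intro mult_left_mono; simp)+
  ultimately have R: "R (real t0) \<le> \<epsilon> / 6" "R (real t0) \<le> \<epsilon> * \<delta> / 6" by linarith+
  then have R': "3 * R (real t0) / \<epsilon> \<le> \<delta> / 2" using \<epsilon> by (simp add: field_simps)
  define K0 where "K0 = nat \<lceil>72 * (real t0)\<^sup>2 / (\<epsilon>\<^sup>2 * \<delta>)\<rceil> + 1"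
  show thesis
  proof (rule that)
    fix B assume B: "finite B" "B \<subseteq> I" and K0: "K0 \<le> card B"
    then have "B \<noteq> {}" "72 * (real t0)\<^sup>2 / (\<epsilon>\<^sup>2 * \<delta>) < real (card B)"
      unfolding K0_def by auto linarith
    moreover have "0 < real (card B)" using B \<open>B \<noteq> {}\<close> by (simp add: card_gt_0_iff)
    ultimately have "36 * (real t0)\<^sup>2 / (\<epsilon>\<^sup>2 * real (card B)) \<le> \<delta> / 2"
      using \<epsilon> \<delta> by (simp add: field_simps)
    then show "prob {\<omega>\<in>space M. \<epsilon> * real (card B)
        \<le> \<bar>(\<Sum>n\<in>B. X n \<omega>) - real (card B) * (\<integral>\<omega>. Y \<omega> \<partial>M)\<bar>} \<le> \<delta>"
      using prob_sum_deviation_le[OF int B \<open>B \<noteq> {}\<close> \<epsilon> _ R(1)[unfolded R_def]] R'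
      unfolding R_def by simp
  qed
qed

end

section \<open>Negatively associated fields\<close>

locale neg_assoc_field = neg_assoc_ident M "pos_idx :: ('d::finite \<Rightarrow> nat) set" X "X (\<lambda>_. 1)"
  for M :: "'a measure" and X :: "('d::finite \<Rightarrow> nat) \<Rightarrow> 'a \<Rightarrow> real"
begin

lemma measurable_partial_sum[measurable]: "(\<lambda>\<omega>. partial_sum n X \<omega>) \<in> borel_measurable M"
  unfolding partial_sum_eq_sum_index_box using index_box_subset_pos_idx measurable_X
  by (intro borel_measurable_sum) auto

lemma integrable_lil_moment_if_sums_bounded:
  fixes c :: real and N :: nat
  assumes c: "0 < c" and N: "1 \<le> N"
    and sums: "\<And>F. finite F \<Longrightarrow> F \<subseteq> {n. \<forall>i. N \<le> n i} \<Longrightarrow>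
      (\<Sum>n\<in>F. prob {\<omega>\<in>space M. c * lil_scale CARD('d) (idx_size n) < \<bar>X n \<omega>\<bar>}) \<le> B"
  shows "integrable M (\<lambda>\<omega>. lil_moment CARD('d) (X (\<lambda>_. 1) \<omega>))"
proof -
  define R where "R = {n :: 'd \<Rightarrow> nat. \<forall>i. N \<le> n i}"
  have R: "R \<subseteq> pos_idx" unfolding R_def pos_idx_def using N by (auto intro: le_trans)
  have level: "{n\<in>R. c * lil_scale CARD('d) (idx_size n) < y} = lil_below c N y" for y
    unfolding R_def lil_below_def by auto
  have "(\<integral>\<^sup>+\<omega>. ennreal (card {n\<in>R. c * lil_scale CARD('d) (idx_size n) < \<bar>X (\<lambda>_. 1) \<omega>\<bar>}) \<partial>M)
      \<le> ennreal B"
  proof (rule nn_integral_card_exceed_le[OF R])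
    show "finite {n\<in>R. c * lil_scale CARD('d) (idx_size n) < y}" for y
      unfolding level by (rule finite_lil_below[OF c N])
  qed (use sums in \<open>simp add: R_def\<close>)
  then have card: "(\<integral>\<^sup>+\<omega>. ennreal (card (lil_below c N \<bar>X (\<lambda>_. 1) \<omega>\<bar> :: ('d \<Rightarrow> nat) set)) \<partial>M)
      \<le> ennreal B"
    unfolding level .
  obtain C0 C1 where C: "0 \<le> C0" "0 \<le> C1"
    and bound: "\<And>y. lil_moment CARD('d) y
        \<le> C0 + C1 * real (card (lil_below c N \<bar>y\<bar> :: ('d \<Rightarrow> nat) set))"
    using lil_moment_le_card_lil_below[OF c N] by blast
  have meas_card: "(\<lambda>\<omega>. real (card (lil_below c N \<bar>X (\<lambda>_. 1) \<omega>\<bar> :: ('d \<Rightarrow> nat) set)))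
      \<in> borel_measurable M"
    using borel_measurable_mono[OF mono_card_lil_below[OF c N]] measurable_Y by measurable
  have "ennreal (norm (lil_moment CARD('d) y))
      \<le> ennreal C0 + ennreal C1 * ennreal (card (lil_below c N \<bar>y\<bar> :: ('d \<Rightarrow> nat) set))" for y
  proof -
    have "ennreal (norm (lil_moment CARD('d) y))
        \<le> ennreal (C0 + C1 * real (card (lil_below c N \<bar>y\<bar> :: ('d \<Rightarrow> nat) set)))"
      using bound[of y] lil_moment_nonneg[of _ y] by (intro ennreal_leI) simp
    then show ?thesis using C by (simp add: ennreal_plus ennreal_mult)
  qed
  then have "(\<integral>\<^sup>+\<omega>. ennreal (norm (lil_moment CARD('d) (X (\<lambda>_. 1) \<omega>))) \<partial>M)
      \<le> (\<integral>\<^sup>+\<omega>. ennreal C0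
          + ennreal C1 * ennreal (card (lil_below c N \<bar>X (\<lambda>_. 1) \<omega>\<bar> :: ('d \<Rightarrow> nat) set)) \<partial>M)"
    by (intro nn_integral_mono)
  also have "\<dots> = ennreal C0
      + ennreal C1 * (\<integral>\<^sup>+\<omega>. ennreal (card (lil_below c N \<bar>X (\<lambda>_. 1) \<omega>\<bar> :: ('d \<Rightarrow> nat) set)) \<partial>M)"
    using meas_card by (subst nn_integral_add) (auto simp: nn_integral_cmult emeasure_space_1)
  also have "\<dots> < \<infinity>"
    using card by (simp add: ennreal_mult_less_top order.strict_trans1[OF _ ennreal_less_top])
  finally show ?thesis
    using measurable_Y by (intro integrableI_bounded) (auto simp: lil_moment_def Log_def)
qed

lemma prob_UN_exceed_eq_1:
  fixes c :: real and N :: nat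
  assumes c: "0 < c" and N: "1 \<le> N"
    and not_int: "\<not> integrable M (\<lambda>\<omega>. lil_moment CARD('d) (X (\<lambda>_. 1) \<omega>))"
  shows "prob (\<Union>n\<in>{n. \<forall>i. N \<le> n i}. {\<omega>\<in>space M. c * lil_scale CARD('d) (idx_size n) < \<bar>X n \<omega>\<bar>}) = 1"
proof (rule prob_UN_abs_gt_eq_1)
  show "{n :: 'd \<Rightarrow> nat. \<forall>i. N \<le> n i} \<subseteq> pos_idx"
    unfolding pos_idx_def using N by (auto intro: le_trans)
  show "0 \<le> c * lil_scale CARD('d) (idx_size n)" for n
    using c lil_scale_nonneg by simp
  show "\<exists>F. finite F \<and> F \<subseteq> {n. \<forall>i. N \<le> n i} \<and>
      B < (\<Sum>n\<in>F. prob {\<omega>\<in>space M. c * lil_scale CARD('d) (idx_size n) < \<bar>X n \<omega>\<bar>})" for B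
  proof (rule ccontr)
    assume "\<not> ?thesis"
    then have sums: "\<And>F. finite F \<Longrightarrow> F \<subseteq> {n. \<forall>i. N \<le> n i} \<Longrightarrow>
        (\<Sum>n\<in>F. prob {\<omega>\<in>space M. c * lil_scale CARD('d) (idx_size n) < \<bar>X n \<omega>\<bar>}) \<le> B"
      by (auto simp: not_less)
    show False using integrable_lil_moment_if_sums_bounded[OF c N sums] not_int by simp
  qed
qed simp

text \<open>If the moment were infinite, then almost surely \<open>\<bar>X\<^sub>n\<bar> > c b\<^sub>n\<close> for multi-indices \<open>n\<close>
  arbitrarily far out, for every \<open>c\<close>; but a bounded limsup of \<open>\<bar>S\<^sub>n\<bar>/b\<^sub>n\<close> bounds \<open>\<bar>X\<^sub>n\<bar>/b\<^sub>n\<close>.\<close>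
lemma integrable_lil_moment:
  assumes "0 < prob {\<omega>\<in>space M.
    Limsup mi_at_top (\<lambda>n. ereal (\<bar>partial_sum n X \<omega>\<bar> / lil_scale CARD('d) (idx_size n))) < \<infinity>}"
    (is "0 < prob ?E")
  shows "integrable M (\<lambda>\<omega>. lil_moment CARD('d) (X (\<lambda>_. 1) \<omega>))"
proof (rule ccontr)
  assume not_int: "\<not> ?thesis"
  define U where "U m N = (\<Union>n\<in>{n. \<forall>i. Suc N \<le> n i}.
    {\<omega>\<in>space M. real (Suc m) * lil_scale CARD('d) (idx_size n) < \<bar>X n \<omega>\<bar>})" for m N :: nat
  have "AE \<omega> in M. \<forall>m N. \<omega> \<in> U m N"
    unfolding AE_all_countable U_def using not_int
      by (intro allI AE_prob_1 prob_UN_exceed_eq_1) auto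
  moreover have "\<omega> \<notin> ?E" if U: "\<forall>m N. \<omega> \<in> U m N" for \<omega>
  proof
    assume "\<omega> \<in> ?E"
    then have "Limsup mi_at_top (\<lambda>n. ereal (\<bar>partial_sum n X \<omega>\<bar> / lil_scale CARD('d) (idx_size n)))
        < \<infinity>"
      by simp
    then obtain B N where B: "0 \<le> B" "1 \<le> N"
      and bound: "\<And>n. \<forall>i. N \<le> n i \<Longrightarrow> \<bar>partial_sum n X \<omega>\<bar> \<le> B * lil_scale CARD('d) (idx_size n)"
      by (rule partial_sum_bound_of_Limsup) blast
    define m where "m = nat \<lceil>2 ^ CARD('d) * B\<rceil>"
    obtain n where n: "\<forall>i. Suc N \<le> n i"
      and big: "real (Suc m) * lil_scale CARD('d) (idx_size n) < \<bar>X n \<omega>\<bar>"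
      using U unfolding U_def by blast
    have "\<bar>X n \<omega>\<bar> \<le> 2 ^ CARD('d) * B * lil_scale CARD('d) (idx_size n)"
      using summand_bound_of_partial_sum_bound[OF mono_lil_scale B(1) bound] n by simp
    also have "\<dots> \<le> real (Suc m) * lil_scale CARD('d) (idx_size n)"
      unfolding m_def using lil_scale_nonneg by (intro mult_right_mono) linarith+
    finally show False using big by simp
  qed
  ultimately have "AE \<omega> in M. \<omega> \<notin> ?E" by (auto elim: AE_mp)
  moreover have "?E \<in> events" using assms measure_notin_sets by fastforce
  ultimately have "prob ?E = 0" by (intro iffD2[OF prob_eq_0])
  then show False using assms by simp
qed

lemma weak_law_diagonal:
  fixes \<epsilon> \<delta> :: real
  assumes int: "integrable M (X (\<lambda>_. 1))" and \<epsilon>: "0 < \<epsilon>" and \<delta>: "0 < \<delta>"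
  obtains K0 where "\<And>k. K0 \<le> k \<Longrightarrow> prob {\<omega>\<in>space M. \<epsilon> * real (k ^ CARD('d))
    \<le> \<bar>partial_sum (\<lambda>_. k) X \<omega> - real (k ^ CARD('d)) * (\<integral>\<omega>. X (\<lambda>_. 1) \<omega> \<partial>M)\<bar>} \<le> \<delta>"
proof -
  obtain K0 where K0: "\<And>B. finite B \<Longrightarrow> B \<subseteq> pos_idx \<Longrightarrow> K0 \<le> card B \<Longrightarrow>
      prob {\<omega>\<in>space M. \<epsilon> * real (card B)
        \<le> \<bar>(\<Sum>n\<in>B. X n \<omega>) - real (card B) * (\<integral>\<omega>. X (\<lambda>_. 1) \<omega> \<partial>M)\<bar>} \<le> \<delta>"
    using weak_law[OF int \<epsilon> \<delta>] by blast
  have card: "K0 \<le> card (index_box (\<lambda>_::'d. k))" if "K0 \<le> k" for k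
  proof -
    have "k \<le> k ^ CARD('d)" by (cases "k = 0") (simp_all add: self_le_power)
    then show ?thesis using that by (simp add: card_index_box_const)
  qed
  show ?thesis
  proof (rule that)
    fix k assume "K0 \<le> k"
    then have "K0 \<le> card (index_box (\<lambda>_::'d. k))" by (rule card)
    from K0[OF finite_index_box index_box_subset_pos_idx this]
    show "prob {\<omega>\<in>space M. \<epsilon> * real (k ^ CARD('d))
      \<le> \<bar>partial_sum (\<lambda>_. k) X \<omega> - real (k ^ CARD('d)) * (\<integral>\<omega>. X (\<lambda>_. 1) \<omega> \<partial>M)\<bar>} \<le> \<delta>"
      by (simp add: partial_sum_eq_sum_index_box card_index_box_const)
  qed
qed

text \<open>On the event of positive probability where the limsup is finite, \<open>S\<^sub>(\<^sub>k\<^sub>,\<^sub>\<dots>\<^sub>,\<^sub>k\<^sub>) = o(k\<^sup>d)\<close>,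
  which the weak law forbids unless the mean vanishes.\<close>
lemma integral_eq_0:
  assumes "0 < prob {\<omega>\<in>space M.
    Limsup mi_at_top (\<lambda>n. ereal (\<bar>partial_sum n X \<omega>\<bar> / lil_scale CARD('d) (idx_size n))) < \<infinity>}"
    (is "0 < prob ?E")
  and int: "integrable M (X (\<lambda>_. 1))"
  shows "(\<integral>\<omega>. X (\<lambda>_. 1) \<omega> \<partial>M) = 0"
proof (rule ccontr)
  define \<mu> where "\<mu> = (\<integral>\<omega>. X (\<lambda>_. 1) \<omega> \<partial>M)"
  define \<epsilon> where "\<epsilon> = \<bar>\<mu>\<bar> / 2"
  define p where "p = prob ?E"
  assume "(\<integral>\<omega>. X (\<lambda>_. 1) \<omega> \<partial>M) \<noteq> 0"
  then have \<epsilon>: "0 < \<epsilon>" unfolding \<epsilon>_def \<mu>_def by simp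
  have p: "0 < p" unfolding p_def using assms(1) .
  define H where "H K = {\<omega>\<in>space M. \<forall>k\<ge>K. \<bar>partial_sum (\<lambda>_::'d. k) X \<omega>\<bar> < \<epsilon> * real (k ^ CARD('d))}"
    for K
  have E_sub: "?E \<subseteq> (\<Union>K. H K)"
  proof
    fix \<omega> assume \<omega>: "\<omega> \<in> ?E"
    then have "eventually (\<lambda>k. \<bar>partial_sum (\<lambda>_::'d. k) X \<omega>\<bar>
        < \<epsilon> * real (k ^ CARD('d))) sequentially"
      using \<epsilon> by (intro eventually_abs_partial_sum_const_less) auto
    then show "\<omega> \<in> (\<Union>K. H K)" using \<omega> unfolding H_def eventually_sequentially by auto
  qed
  have E_ev: "?E \<in> events" using assms(1) measure_notin_sets by fastforce
  have H: "incseq H" "H K \<in> events" for K unfolding H_def incseq_def by auto measurable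
  have "p / 2 < prob ?E" using p unfolding p_def by simp
  then obtain K1 where K1: "p / 2 < prob (H K1)" by (elim incseq_prob_gtE[OF E_ev E_sub H])
  have "0 < p / 4" using p by simp
  then obtain K0 where K0: "\<And>k. K0 \<le> k \<Longrightarrow> prob {\<omega>\<in>space M. \<epsilon> * real (k ^ CARD('d))
      \<le> \<bar>partial_sum (\<lambda>_. k) X \<omega> - real (k ^ CARD('d)) * \<mu>\<bar>} \<le> p / 4"
    using weak_law_diagonal[OF int \<epsilon>] unfolding \<mu>_def by blast
  define k where "k = max K1 K0"
  have "H K1 \<subseteq> {\<omega>\<in>space M. \<epsilon> * real (k ^ CARD('d))
      \<le> \<bar>partial_sum (\<lambda>_. k) X \<omega> - real (k ^ CARD('d)) * \<mu>\<bar>}"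
  proof safe
    fix \<omega> assume "\<omega> \<in> H K1"
    then have "\<bar>partial_sum (\<lambda>_::'d. k) X \<omega>\<bar> < \<epsilon> * real (k ^ CARD('d))"
      unfolding H_def k_def by auto
    moreover have "\<bar>real (k ^ CARD('d)) * \<mu>\<bar> = 2 * (\<epsilon> * real (k ^ CARD('d)))"
      unfolding \<epsilon>_def by (simp add: abs_mult)
    ultimately show "\<epsilon> * real (k ^ CARD('d)) \<le> \<bar>partial_sum (\<lambda>_. k) X \<omega> - real (k ^ CARD('d)) * \<mu>\<bar>"
      by linarith
  qed (auto simp: H_def)
  then have "prob (H K1) \<le> p / 4"
    by (intro order_trans[OF finite_measure_mono K0]) (auto simp: k_def)
  then show False using K1 p by linarith
qed

end

theorem theorem1p3:
  fixes M :: "'a measure" and X :: "('d::finite \<Rightarrow> nat) \<Rightarrow> 'a \<Rightarrow> real"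
  assumes "prob_space M"
    and rv: "\<And>n. n \<in> pos_idx \<Longrightarrow> X n \<in> borel_measurable M"
    and NA: "neg_assoc M pos_idx X"
    and id: "\<And>n m. n \<in> pos_idx \<Longrightarrow> m \<in> pos_idx \<Longrightarrow> distr M borel (X n) = distr M borel (X m)"
    and LIL: "measure M {\<omega> \<in> space M.
                Limsup mi_at_top (\<lambda>n. ereal (\<bar>partial_sum n X \<omega>\<bar> /
                   sqrt (2 * real CARD('d) * real (idx_size n) * Log (Log (real (idx_size n))))))
                < \<infinity>} > 0"
  shows "integrable M (X (\<lambda>_. 1)) \<and> (\<integral>\<omega>. X (\<lambda>_. 1) \<omega> \<partial>M) = 0 \<and>
         integrable M (\<lambda>\<omega>. (X (\<lambda>_. 1) \<omega>)\<^sup>2 * (Log \<bar>X (\<lambda>_. 1) \<omega>\<bar>) ^ (CARD('d) - 1)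
                              / Log (Log \<bar>X (\<lambda>_. 1) \<omega>\<bar>))"
proof -
  interpret neg_assoc_field M X
  proof (unfold neg_assoc_field_def, intro neg_assoc_ident.intro
      neg_assoc_rvs.intro neg_assoc_rvs_axioms.intro
      neg_assoc_ident_axioms.intro assms(1) NA)
    show "X n \<in> borel_measurable M" if "n \<in> pos_idx" for n using that by (rule rv)
    show "X (\<lambda>_. 1) \<in> borel_measurable M" by (rule rv) (simp add: pos_idx_def)
    show "distr M borel (X n) = distr M borel (X (\<lambda>_. 1))" if "n \<in> pos_idx" for n
      using that by (rule id) (simp add: pos_idx_def)
  qed
  have E: "0 < prob {\<omega>\<in>space M.
      Limsup mi_at_top (\<lambda>n. ereal (\<bar>partial_sum n X \<omega>\<bar> / lil_scale CARD('d) (idx_size n))) < \<infinity>}"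
    using LIL unfolding lil_scale_def .
  have moment: "integrable M (\<lambda>\<omega>. lil_moment CARD('d) (X (\<lambda>_. 1) \<omega>))"
    by (rule integrable_lil_moment[OF E])
  have int: "integrable M (X (\<lambda>_. 1))"
    by (rule integrable_if_integrable_lil_moment[OF moment measurable_Y])
  show ?thesis using moment int integral_eq_0[OF E int] unfolding lil_moment_def by simp
qed

end
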